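(* Let $d\in\mathbb N$, and assume (A1) and (A2). Then $H(M^{{\boldsymbol\eta},m})\subseteq H(M^{{\boldsymbol\eta}^\uparrow,m^\uparrow})$ (both spaces consisting of functions on $D^d$) and the identical embedding has norm at most one.
   Context: For a reproducing kernel $M$ over a set $\mathfrak Z$, $H(M)$ is its RKHS with norm $\|\cdot\|_M$. Write $[d]=\{1,\dots,d\}$, $\mathcal U_d$ the power set of $[d]$, weights $\mathcal W_d$ the families $(\gamma_u)_{u\in\mathcal U_d}$ of non-negative reals. For $C>0$, $T^\uparrow_{d,C}\colon\mathcal W_d\to\mathcal W_d$, $(T^\uparrow_{d,C}{\boldsymbol\gamma})_u=\sum_{v\supseteq u}C^{2|v|}\gamma_v$, and $\mathcal S_{d,C}=\{{\boldsymbol\gamma}\in\mathcal W_d:\sum_vC^{2|v|}\gamma_v<\infty\}$. Given a reproducing kernel $m\ne0$ over a non-empty set $D$ and $u\in\mathcal U_d$, let $m_u(\mathbf x,\mathbf y)=\prod_{j\in u}m(x_j,y_j)$ ($m_\emptyset=1$), and for weights ${\boldsymbol\eta}$ let $M^{{\boldsymbol\eta},m}(\mathbf x,\mathbf y)=\sum_{u\in\mathcal U_d}\eta_u m_u(\mathbf x,\mathbf y)$ for $\mathbf x,\mathbf y\in D^d$. Assumptions: (A1) $m,m^\uparrow$ are nonzero reproducing kernels over $D$ with $H(m)\subseteq H(1+m^\uparrow)$, and $C\ge\sup\{\|f\|_{1+m^\uparrow}:f\in H(m),\|f\|_m\le1\}$, $C>0$. (A2) ${\boldsymbol\eta}\in\mathcal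 S_{d,C}$ and ${\boldsymbol\eta}^\uparrow=T^\uparrow_{d,C}{\boldsymbol\eta}$. *)

theory Defs
  imports Complex_Main "HOL-Library.FuncSet" "HOL-Analysis.Infinite_Sum"
begin

text \<open>Reproducing kernel Hilbert spaces of real-valued functions on a carrier set Z.
  Functions are represented as total functions that vanish outside Z.\<close>

definition ksec :: "'z set \<Rightarrow> ('z \<Rightarrow> 'z \<Rightarrow> real) \<Rightarrow> 'z \<Rightarrow> 'z \<Rightarrow> real" where
  "ksec Z K x = (\<lambda>y. if y \<in> Z then K y x else 0)"

definition is_rkhs :: "'z set \<Rightarrow> ('z \<Rightarrow> 'z \<Rightarrow> real) \<Rightarrow> ('z \<Rightarrow> real) set
     \<Rightarrow> (('z \<Rightarrow> real) \<Rightarrow> ('z \<Rightarrow> real) \<Rightarrow> real) \<Rightarrow> bool" where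
  "is_rkhs Z K V ip \<longleftrightarrow>
     V \<subseteq> {f. \<forall>z. z \<notin> Z \<longrightarrow> f z = 0} \<and>
     (\<lambda>_. 0) \<in> V \<and>
     (\<forall>f\<in>V. \<forall>g\<in>V. (\<lambda>z. f z + g z) \<in> V) \<and>
     (\<forall>f\<in>V. \<forall>a::real. (\<lambda>z. a * f z) \<in> V) \<and>
     (\<forall>f\<in>V. \<forall>g\<in>V. \<forall>h\<in>V. ip (\<lambda>z. f z + g z) h = ip f h + ip g h) \<and>
     (\<forall>f\<in>V. \<forall>g\<in>V. \<forall>a::real. ip (\<lambda>z. a * f z) g = a * ip f g) \<and>
     (\<forall>f\<in>V. \<forall>g\<in>V. ip f g = ip g f) \<and>
     (\<forall>f\<in>V. ip f f \<ge> 0 \<and> (ip f f = 0 \<longrightarrow> f = (\<lambda>_. 0))) \<and>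
     (\<forall>s::nat \<Rightarrow> 'z \<Rightarrow> real. (\<forall>n. s n \<in> V) \<and>
        (\<forall>e>0. \<exists>N. \<forall>m\<ge>N. \<forall>n\<ge>N. ip (\<lambda>z. s m z - s n z) (\<lambda>z. s m z - s n z) < e)
        \<longrightarrow> (\<exists>g\<in>V. (\<lambda>n. ip (\<lambda>z. s n z - g z) (\<lambda>z. s n z - g z)) \<longlonglongrightarrow> 0)) \<and>
     (\<forall>x\<in>Z. ksec Z K x \<in> V \<and> (\<forall>f\<in>V. ip f (ksec Z K x) = f x))"

definition reproducing_kernel :: "'z set \<Rightarrow> ('z \<Rightarrow> 'z \<Rightarrow> real) \<Rightarrow> bool" where
  "reproducing_kernel Z K \<longleftrightarrow> (\<exists>V ip. is_rkhs Z K V ip)"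

definition rkhs :: "'z set \<Rightarrow> ('z \<Rightarrow> 'z \<Rightarrow> real) \<Rightarrow> ('z \<Rightarrow> real) set" where
  "rkhs Z K = (THE V. \<exists>ip. is_rkhs Z K V ip)"

definition rkhs_norm :: "'z set \<Rightarrow> ('z \<Rightarrow> 'z \<Rightarrow> real) \<Rightarrow> ('z \<Rightarrow> real) \<Rightarrow> real" where
  "rkhs_norm Z K f = sqrt ((SOME ip. is_rkhs Z K (rkhs Z K) ip) f f)"

text \<open>D^d as functions on {1..d} (extensional, value undefined elsewhere).\<close>
definition cube :: "'a set \<Rightarrow> nat \<Rightarrow> (nat \<Rightarrow> 'a) set" where
  "cube D d = PiE {1..d} (\<lambda>_. D)"

definition prod_kernel :: "('a \<Rightarrow> 'a \<Rightarrow> real) \<Rightarrow> nat set \<Rightarrow> (nat \<Rightarrow> 'a) \<Rightarrow> (nat \<Rightarrow> 'a) \<Rightarrow> real" where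
  "prod_kernel m u x y = (\<Prod>j\<in>u. m (x j) (y j))"

definition weighted_kernel :: "nat \<Rightarrow> (nat set \<Rightarrow> real) \<Rightarrow> ('a \<Rightarrow> 'a \<Rightarrow> real)
     \<Rightarrow> (nat \<Rightarrow> 'a) \<Rightarrow> (nat \<Rightarrow> 'a) \<Rightarrow> real" where
  "weighted_kernel d \<eta> m x y = (\<Sum>u\<in>Pow {1..d}. \<eta> u * prod_kernel m u x y)"

definition weights :: "nat \<Rightarrow> (nat set \<Rightarrow> real) set" where
  "weights d = {\<gamma>. \<forall>u\<in>Pow {1..d}. \<gamma> u \<ge> 0}"

definition S_set :: "nat \<Rightarrow> real \<Rightarrow> (nat set \<Rightarrow> real) set" where
  "S_set d C = {\<gamma> \<in> weights d. (\<lambda>v. C ^ (2 * card v) * \<gamma> v) summable_on Pow {1..d}}"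

definition T_up :: "nat \<Rightarrow> real \<Rightarrow> (nat set \<Rightarrow> real) \<Rightarrow> nat set \<Rightarrow> real" where
  "T_up d C \<gamma> u = (\<Sum>v\<in>{v. u \<subseteq> v \<and> v \<subseteq> {1..d}}. C ^ (2 * card v) * \<gamma> v)"

end

theory Submission
  imports Defs "HOL-Analysis.Elementary_Normed_Spaces"
begin

(* Aronszajn's inclusion theorem: f belongs to H(K) with squared norm at most c exactly
   when c K(x,y) - f(x) f(y) is a positive definite kernel, so if K2 - K1 is positive
   definite then H(K1) is contained in H(K2) with norm at most one.  Conversely, the
   norm-C embedding of H(m) into H(1 + m_up) makes C^2 (1 + m_up) - m positive definite.
   Expanding the products, the kernel with weights T_up eta is
   sum_u eta_u prod_{j in u} C^2 (1 + m_up(x_j, y_j)), and by the Schur product theorem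
   prod_j C^2 (1 + m_up) - prod_j m is positive definite, hence so is the difference of
   the two weighted kernels.  Since H(K) is only defined for reproducing kernels, the
   weighted kernels must also be shown to have an RKHS: this is the Moore-Aronszajn
   theorem, obtained by completing the span of the kernel sections inside the space of
   functions. *)

section \<open>Pre-Hilbert spaces of real functions\<close>

lemma quadratic_nonneg_imp_discriminant:
  fixes a b c :: real
  assumes nonneg: "\<And>t. 0 \<le> a + 2 * b * t + c * t\<^sup>2" and "0 \<le> c"
  shows "b\<^sup>2 \<le> a * c"
proof (cases "c = 0")
  case True
  show ?thesis
  proof (cases "b = 0")
    case False
    have "0 \<le> a + 2 * b * (-(a + 1) / (2 * b)) + c * (-(a + 1) / (2 * b))\<^sup>2" by (rule nonneg)
    with False True show ?thesis by (simp add: field_simps)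
  qed (use True in simp)
next
  case False
  with \<open>0 \<le> c\<close> have c: "c > 0" by simp
  have "0 \<le> a + 2 * b * (-b / c) + c * (-b / c)\<^sup>2" by (rule nonneg)
  with c show ?thesis by (simp add: field_simps power2_eq_square)
qed

lemma exists_margin:
  fixes e B :: real
  assumes "0 < e" "0 \<le> B"
  obtains \<delta> where "0 < \<delta>" "2 * B * \<delta> < e"
proof
  show "0 < e / (2 * (B + 1))" using assms by simp
  have "2 * B * (e / (2 * (B + 1))) = e * (B / (B + 1))" using assms(2) by (simp add: field_simps)
  also have "\<dots> < e * 1" using assms by (intro mult_strict_left_mono) auto
  finally show "2 * B * (e / (2 * (B + 1))) < e" by simp
qed

lemma square_le_square_of_mult_le:
  fixes a b :: real
  assumes "0 \<le> a" "a * a \<le> a * b"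
  shows "a\<^sup>2 \<le> b\<^sup>2"
proof (cases "a = 0")
  case False
  with assms have "a \<le> b" by (simp add: mult_le_cancel_left)
  then show ?thesis using assms(1) by (rule power_mono)
qed simp

locale pre_hilbert =
  fixes V :: "('z \<Rightarrow> real) set" and ip :: "('z \<Rightarrow> real) \<Rightarrow> ('z \<Rightarrow> real) \<Rightarrow> real"
  assumes zero_mem [simp]: "(\<lambda>_. 0) \<in> V"
    and add_mem [intro]: "f \<in> V \<Longrightarrow> g \<in> V \<Longrightarrow> (\<lambda>z. f z + g z) \<in> V"
    and scale_mem [intro]: "f \<in> V \<Longrightarrow> (\<lambda>z. a * f z) \<in> V"
    and ip_add_left: "f \<in> V \<Longrightarrow> g \<in> V \<Longrightarrow> h \<in> V \<Longrightarrow> ip (\<lambda>z. f z + g z) h = ip f h + ip g h"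
    and ip_scale_left: "f \<in> V \<Longrightarrow> g \<in> V \<Longrightarrow> ip (\<lambda>z. a * f z) g = a * ip f g"
    and ip_sym: "f \<in> V \<Longrightarrow> g \<in> V \<Longrightarrow> ip f g = ip g f"
    and ip_self_nonneg: "f \<in> V \<Longrightarrow> 0 \<le> ip f f"
begin

lemma diff_mem [intro]: "f \<in> V \<Longrightarrow> g \<in> V \<Longrightarrow> (\<lambda>z. f z - g z) \<in> V"
  using add_mem[of f "\<lambda>z. (-1) * g z"] scale_mem[of g "-1"] by simp

lemma ip_add_right: "f \<in> V \<Longrightarrow> g \<in> V \<Longrightarrow> h \<in> V \<Longrightarrow> ip h (\<lambda>z. f z + g z) = ip h f + ip h g"
  by (simp add: ip_sym[of h] add_mem ip_add_left)

lemma ip_scale_right: "f \<in> V \<Longrightarrow> g \<in> V \<Longrightarrow> ip g (\<lambda>z. a * f z) = a * ip g f"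
  by (simp add: ip_sym[of g] scale_mem ip_scale_left)

lemma ip_zero_left [simp]: "g \<in> V \<Longrightarrow> ip (\<lambda>_. 0) g = 0"
  using ip_scale_left[of "\<lambda>_. 0" g 0] by simp

lemma ip_diff_left: "f \<in> V \<Longrightarrow> g \<in> V \<Longrightarrow> h \<in> V \<Longrightarrow> ip (\<lambda>z. f z - g z) h = ip f h - ip g h"
  using ip_add_left[of f "\<lambda>z. (-1) * g z" h] ip_scale_left[of g h "-1"] scale_mem[of g "-1"] by simp

lemma ip_diff_right: "f \<in> V \<Longrightarrow> g \<in> V \<Longrightarrow> h \<in> V \<Longrightarrow> ip h (\<lambda>z. f z - g z) = ip h f - ip h g"
  by (simp add: ip_sym[of h] diff_mem ip_diff_left)

lemma ip_expand:
  assumes "f \<in> V" "g \<in> V"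
  shows "ip (\<lambda>z. f z + t * g z) (\<lambda>z. f z + t * g z) = ip f f + 2 * t * ip f g + t\<^sup>2 * ip g g"
  using assms by (simp add: ip_add_left ip_add_right ip_scale_left ip_scale_right add_mem scale_mem
      ip_sym[of g f] power2_eq_square algebra_simps)

lemma cauchy_schwarz_sq:
  assumes "f \<in> V" "g \<in> V"
  shows "(ip f g)\<^sup>2 \<le> ip f f * ip g g"
proof (rule quadratic_nonneg_imp_discriminant)
  fix t
  show "0 \<le> ip f f + 2 * ip f g * t + ip g g * t\<^sup>2"
    using ip_self_nonneg[of "\<lambda>z. f z + t * g z"] ip_expand[OF assms, of t] assms
    by (simp add: add_mem scale_mem algebra_simps)
qed (use assms ip_self_nonneg in auto)

definition hnorm :: "('z \<Rightarrow> real) \<Rightarrow> real" where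
  "hnorm f = sqrt (ip f f)"

definition hdist :: "('z \<Rightarrow> real) \<Rightarrow> ('z \<Rightarrow> real) \<Rightarrow> real" where
  "hdist f g = hnorm (\<lambda>z. f z - g z)"

lemma hnorm_nonneg [simp]: "f \<in> V \<Longrightarrow> 0 \<le> hnorm f"
  by (simp add: hnorm_def ip_self_nonneg)

lemma hnorm_sq: "f \<in> V \<Longrightarrow> (hnorm f)\<^sup>2 = ip f f"
  by (simp add: hnorm_def ip_self_nonneg)

lemma hdist_nonneg [simp]: "f \<in> V \<Longrightarrow> g \<in> V \<Longrightarrow> 0 \<le> hdist f g"
  by (simp add: hdist_def diff_mem)

lemma hdist_sq: "f \<in> V \<Longrightarrow> g \<in> V \<Longrightarrow> (hdist f g)\<^sup>2 = ip (\<lambda>z. f z - g z) (\<lambda>z. f z - g z)"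
  by (simp add: hdist_def hnorm_sq diff_mem)

lemma cauchy_schwarz: "f \<in> V \<Longrightarrow> g \<in> V \<Longrightarrow> \<bar>ip f g\<bar> \<le> hnorm f * hnorm g"
  unfolding hnorm_def by (metis cauchy_schwarz_sq real_sqrt_abs real_sqrt_le_mono real_sqrt_mult)

lemma hnorm_scale: "f \<in> V \<Longrightarrow> hnorm (\<lambda>z. a * f z) = \<bar>a\<bar> * hnorm f"
  by (simp add: hnorm_def ip_scale_left ip_scale_right scale_mem real_sqrt_mult
      mult.assoc[symmetric] flip: power2_eq_square)

lemma hnorm_triangle:
  assumes "f \<in> V" "g \<in> V"
  shows "hnorm (\<lambda>z. f z + g z) \<le> hnorm f + hnorm g"
proof -
  have "(hnorm (\<lambda>z. f z + g z))\<^sup>2 = ip f f + 2 * ip f g + ip g g"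
    using ip_expand[OF assms, of 1] assms by (simp add: hnorm_sq add_mem)
  also have "\<dots> \<le> (hnorm f + hnorm g)\<^sup>2"
    using cauchy_schwarz[OF assms] assms by (simp add: power2_sum hnorm_sq)
  finally show ?thesis by (rule power2_le_imp_le) (simp add: assms)
qed

lemma hdist_triangle: "f \<in> V \<Longrightarrow> g \<in> V \<Longrightarrow> h \<in> V \<Longrightarrow> hdist f h \<le> hdist f g + hdist g h"
  using hnorm_triangle[of "\<lambda>z. f z - g z" "\<lambda>z. g z - h z"] by (simp add: hdist_def diff_mem)

lemma hdist_commute: "f \<in> V \<Longrightarrow> g \<in> V \<Longrightarrow> hdist f g = hdist g f"
  using hnorm_scale[of "\<lambda>z. g z - f z" "-1"] by (simp add: hdist_def diff_mem)

lemma hdist_self [simp]: "hdist f f = 0"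
  by (simp add: hdist_def hnorm_def)

lemma hdist_add_le:
  assumes "f \<in> V" "f' \<in> V" "g \<in> V" "g' \<in> V"
  shows "hdist (\<lambda>z. f z + g z) (\<lambda>z. f' z + g' z) \<le> hdist f f' + hdist g g'"
  using hnorm_triangle[of "\<lambda>z. f z - f' z" "\<lambda>z. g z - g' z"] assms
  by (simp add: hdist_def diff_mem algebra_simps)

lemma hdist_scale: "f \<in> V \<Longrightarrow> g \<in> V \<Longrightarrow> hdist (\<lambda>z. a * f z) (\<lambda>z. a * g z) = \<bar>a\<bar> * hdist f g"
  using hnorm_scale[of "\<lambda>z. f z - g z" a] by (simp add: hdist_def diff_mem right_diff_distrib)

lemma hnorm_le_hdist: "f \<in> V \<Longrightarrow> g \<in> V \<Longrightarrow> hnorm f \<le> hnorm g + hdist f g"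
  using hnorm_triangle[of g "\<lambda>z. f z - g z"] by (simp add: hdist_def diff_mem)

lemma ip_diff_bound:
  assumes "f \<in> V" "f' \<in> V" "g \<in> V" "g' \<in> V"
  shows "\<bar>ip f g - ip f' g'\<bar> \<le> hdist f f' * hnorm g + hnorm f' * hdist g g'"
proof -
  have "ip f g - ip f' g' = ip (\<lambda>z. f z - f' z) g + ip f' (\<lambda>z. g z - g' z)"
    using assms by (simp add: ip_diff_left ip_diff_right)
  also have "\<bar>\<dots>\<bar> \<le> \<bar>ip (\<lambda>z. f z - f' z) g\<bar> + \<bar>ip f' (\<lambda>z. g z - g' z)\<bar>"
    by (rule abs_triangle_ineq)
  also have "\<dots> \<le> hdist f f' * hnorm g + hnorm f' * hdist g g'"
    unfolding hdist_def using assms by (intro add_mono cauchy_schwarz) auto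
  finally show ?thesis .
qed

definition hcauchy :: "(nat \<Rightarrow> 'z \<Rightarrow> real) \<Rightarrow> bool" where
  "hcauchy s \<longleftrightarrow> (\<forall>n. s n \<in> V) \<and> (\<forall>e>0. \<exists>N. \<forall>m\<ge>N. \<forall>n\<ge>N. hdist (s m) (s n) < e)"

lemma hcauchyD: "hcauchy s \<Longrightarrow> e > 0 \<Longrightarrow> \<exists>N. \<forall>m\<ge>N. \<forall>n\<ge>N. hdist (s m) (s n) < e"
  and hcauchy_mem: "hcauchy s \<Longrightarrow> s n \<in> V"
  by (auto simp: hcauchy_def)

lemma hcauchy_add:
  assumes s: "hcauchy s" and t: "hcauchy t"
  shows "hcauchy (\<lambda>n z. s n z + t n z)"
  unfolding hcauchy_def
proof (intro conjI allI impI)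
  show "(\<lambda>z. s n z + t n z) \<in> V" for n using s t by (simp add: hcauchy_mem add_mem)
  fix e :: real assume "0 < e"
  then obtain N1 N2 where N1: "\<forall>m\<ge>N1. \<forall>n\<ge>N1. hdist (s m) (s n) < e / 2"
    and N2: "\<forall>m\<ge>N2. \<forall>n\<ge>N2. hdist (t m) (t n) < e / 2"
    using hcauchyD[OF s, of "e / 2"] hcauchyD[OF t, of "e / 2"] by auto
  have "hdist (\<lambda>z. s m z + t m z) (\<lambda>z. s n z + t n z) < e" if "m \<ge> max N1 N2" "n \<ge> max N1 N2"
      for m n
    using hdist_add_le[of "s m" "s n" "t m" "t n"] N1 N2 that s t by (force simp: hcauchy_mem)
  then show "\<exists>N. \<forall>m\<ge>N. \<forall>n\<ge>N. hdist (\<lambda>z. s m z + t m z) (\<lambda>z. s n z + t n z) < e" by blast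
qed

lemma hcauchy_scale:
  assumes s: "hcauchy s"
  shows "hcauchy (\<lambda>n z. a * s n z)"
  unfolding hcauchy_def
proof (intro conjI allI impI)
  show "(\<lambda>z. a * s n z) \<in> V" for n using s by (simp add: hcauchy_mem scale_mem)
  fix e :: real assume "0 < e"
  then obtain N where N: "\<forall>m\<ge>N. \<forall>n\<ge>N. hdist (s m) (s n) < e / (\<bar>a\<bar> + 1)"
    using hcauchyD[OF s, of "e / (\<bar>a\<bar> + 1)"] by auto
  have "hdist (\<lambda>z. a * s m z) (\<lambda>z. a * s n z) < e" if "m \<ge> N" "n \<ge> N" for m n
  proof -
    have "hdist (\<lambda>z. a * s m z) (\<lambda>z. a * s n z) = \<bar>a\<bar> * hdist (s m) (s n)"
      using s by (simp add: hdist_scale hcauchy_mem)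
    also have "\<dots> \<le> \<bar>a\<bar> * (e / (\<bar>a\<bar> + 1))"
      using N that by (intro mult_left_mono) (auto simp: less_imp_le)
    also have "\<dots> < e" using \<open>0 < e\<close> by (simp add: field_simps)
    finally show ?thesis .
  qed
  then show "\<exists>N. \<forall>m\<ge>N. \<forall>n\<ge>N. hdist (\<lambda>z. a * s m z) (\<lambda>z. a * s n z) < e" by blast
qed

lemma hcauchy_iff_ip:
  "hcauchy s \<longleftrightarrow> (\<forall>n. s n \<in> V) \<and>
     (\<forall>e>0. \<exists>N. \<forall>m\<ge>N. \<forall>n\<ge>N. ip (\<lambda>z. s m z - s n z) (\<lambda>z. s m z - s n z) < e)"
proof (intro iffI conjI allI impI)
  fix e :: real
  assume s: "hcauchy s" and "0 < e"
  then obtain N where N: "\<forall>m\<ge>N. \<forall>n\<ge>N. hdist (s m) (s n) < sqrt e"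
    using hcauchyD[of s "sqrt e"] by auto
  have "ip (\<lambda>z. s m z - s n z) (\<lambda>z. s m z - s n z) < e" if "m \<ge> N" "n \<ge> N" for m n
  proof -
    have "(hdist (s m) (s n))\<^sup>2 < (sqrt e)\<^sup>2"
      using N that s by (intro power_strict_mono) (auto simp: hcauchy_mem)
    then show ?thesis using s \<open>0 < e\<close> by (simp add: hdist_sq hcauchy_mem)
  qed
  then show "\<exists>N. \<forall>m\<ge>N. \<forall>n\<ge>N. ip (\<lambda>z. s m z - s n z) (\<lambda>z. s m z - s n z) < e" by blast
next
  assume ip: "(\<forall>n. s n \<in> V) \<and>
    (\<forall>e>0. \<exists>N. \<forall>m\<ge>N. \<forall>n\<ge>N. ip (\<lambda>z. s m z - s n z) (\<lambda>z. s m z - s n z) < e)"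
  show "hcauchy s"
    unfolding hcauchy_def
  proof (intro conjI allI impI)
    fix e :: real assume "0 < e"
    then obtain N where N: "\<forall>m\<ge>N. \<forall>n\<ge>N. ip (\<lambda>z. s m z - s n z) (\<lambda>z. s m z - s n z) < e\<^sup>2"
      using ip by (meson zero_less_power)
    have "hdist (s m) (s n) < e" if "m \<ge> N" "n \<ge> N" for m n
      using N that \<open>0 < e\<close> real_sqrt_less_mono[of _ "e\<^sup>2"] by (simp add: hdist_def hnorm_def)
    then show "\<exists>N. \<forall>m\<ge>N. \<forall>n\<ge>N. hdist (s m) (s n) < e" by blast
  qed (use ip in blast)
qed (simp add: hcauchy_mem)

lemma hdist_tendsto_zero_iff:
  assumes "\<And>n. s n \<in> V" "g \<in> V"
  shows "(\<lambda>n. hdist (s n) g) \<longlonglongrightarrow> 0 \<longleftrightarrow> (\<lambda>n. ip (\<lambda>z. s n z - g z) (\<lambda>z. s n z - g z)) \<longlonglongrightarrow> 0"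
proof
  assume "(\<lambda>n. hdist (s n) g) \<longlonglongrightarrow> 0"
  then have "(\<lambda>n. (hdist (s n) g)\<^sup>2) \<longlonglongrightarrow> 0\<^sup>2" by (intro tendsto_power)
  then show "(\<lambda>n. ip (\<lambda>z. s n z - g z) (\<lambda>z. s n z - g z)) \<longlonglongrightarrow> 0" using assms by (simp add: hdist_sq)
next
  assume "(\<lambda>n. ip (\<lambda>z. s n z - g z) (\<lambda>z. s n z - g z)) \<longlonglongrightarrow> 0"
  then have "(\<lambda>n. sqrt (ip (\<lambda>z. s n z - g z) (\<lambda>z. s n z - g z))) \<longlonglongrightarrow> sqrt 0"
    by (intro tendsto_real_sqrt)
  then show "(\<lambda>n. hdist (s n) g) \<longlonglongrightarrow> 0" by (simp add: hdist_def hnorm_def)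
qed

lemma hcauchy_bounded:
  assumes s: "hcauchy s"
  obtains B where "\<And>n. hnorm (s n) \<le> B"
proof -
  obtain N where N: "\<And>m n. m \<ge> N \<Longrightarrow> n \<ge> N \<Longrightarrow> hdist (s m) (s n) < 1"
    using hcauchyD[OF s, of 1] by auto
  have initial: "hnorm (s n) \<le> (\<Sum>k\<le>N. hnorm (s k))" if "n \<le> N" for n
    using that by (intro member_le_sum) (auto simp: hcauchy_mem[OF s])
  have "hnorm (s n) \<le> (\<Sum>k\<le>N. hnorm (s k)) + 1" for n
  proof (cases "n \<le> N")
    case False
    then have "hnorm (s n) \<le> hnorm (s N) + 1"
      using hnorm_le_hdist[of "s n" "s N"] N[of n N] hcauchy_mem[OF s] by simp
    with initial[of N] show ?thesis by simp
  qed (use initial in force)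
  then show ?thesis by (rule that)
qed

lemma hcauchy_ip_convergent:
  assumes s: "hcauchy s" and t: "hcauchy t"
  shows "convergent (\<lambda>n. ip (s n) (t n))"
proof -
  obtain B1 where B1: "\<And>n. hnorm (s n) \<le> B1" using hcauchy_bounded[OF s] by blast
  obtain B2 where B2: "\<And>n. hnorm (t n) \<le> B2" using hcauchy_bounded[OF t] by blast
  define B where "B = max B1 B2"
  have B: "hnorm (s n) \<le> B" "hnorm (t n) \<le> B" "0 \<le> B" for n
    using B1[of n] B2[of n] hnorm_nonneg[OF hcauchy_mem[OF s, of n]]
    by (auto simp: B_def le_max_iff_disj)
  have "Cauchy (\<lambda>n. ip (s n) (t n))"
  proof (rule CauchyI)
    fix e :: real assume "0 < e"
    obtain \<delta> where \<delta>: "\<delta> > 0" "2 * B * \<delta> < e" using exists_margin \<open>0 < e\<close> B(3) by blast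
    obtain N1 where N1: "\<forall>m\<ge>N1. \<forall>n\<ge>N1. hdist (s m) (s n) < \<delta>" using hcauchyD[OF s \<delta>(1)] ..
    obtain N2 where N2: "\<forall>m\<ge>N2. \<forall>n\<ge>N2. hdist (t m) (t n) < \<delta>" using hcauchyD[OF t \<delta>(1)] ..
    have "norm (ip (s m) (t m) - ip (s n) (t n)) < e" if "m \<ge> max N1 N2" "n \<ge> max N1 N2" for m n
    proof -
      have "norm (ip (s m) (t m) - ip (s n) (t n))
          \<le> hdist (s m) (s n) * hnorm (t m) + hnorm (s n) * hdist (t m) (t n)"
        using ip_diff_bound hcauchy_mem[OF s] hcauchy_mem[OF t] by simp
      also have "\<dots> \<le> \<delta> * B + B * \<delta>"
        using N1 N2 that B hcauchy_mem[OF s] hcauchy_mem[OF t] \<delta>(1)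
        by (intro add_mono mult_mono) (auto simp: less_imp_le)
      finally show ?thesis using \<delta>(2) by (simp add: algebra_simps)
    qed
    then show "\<exists>M. \<forall>m\<ge>M. \<forall>n\<ge>M. norm (ip (s m) (t m) - ip (s n) (t n)) < e" by blast
  qed
  then show ?thesis by (simp add: Cauchy_convergent_iff)
qed

lemma ip_asymptotic:
  assumes "hcauchy s" "hcauchy s'" "hcauchy t" "hcauchy t'"
    and "(\<lambda>n. hdist (s n) (s' n)) \<longlonglongrightarrow> 0" "(\<lambda>n. hdist (t n) (t' n)) \<longlonglongrightarrow> 0"
  shows "(\<lambda>n. ip (s n) (t n) - ip (s' n) (t' n)) \<longlonglongrightarrow> 0"
proof -
  obtain B1 where B1: "\<And>n. hnorm (t n) \<le> B1" using hcauchy_bounded[OF assms(3)] by blast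
  obtain B2 where B2: "\<And>n. hnorm (s' n) \<le> B2" using hcauchy_bounded[OF assms(2)] by blast
  have mem: "s n \<in> V" "s' n \<in> V" "t n \<in> V" "t' n \<in> V" for n
    using assms(1-4) by (auto simp: hcauchy_mem)
  have bound: "norm (ip (s n) (t n) - ip (s' n) (t' n))
      \<le> hdist (s n) (s' n) * B1 + B2 * hdist (t n) (t' n)" for n
  proof -
    have "norm (ip (s n) (t n) - ip (s' n) (t' n))
        \<le> hdist (s n) (s' n) * hnorm (t n) + hnorm (s' n) * hdist (t n) (t' n)"
      using ip_diff_bound mem by simp
    also have "\<dots> \<le> hdist (s n) (s' n) * B1 + B2 * hdist (t n) (t' n)"
      using B1 B2 mem by (simp add: add_mono mult_left_mono mult_right_mono)
    finally show ?thesis .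
  qed
  have lim: "(\<lambda>n. hdist (s n) (s' n) * B1 + B2 * hdist (t n) (t' n)) \<longlonglongrightarrow> 0"
    using tendsto_add[OF tendsto_mult_left_zero[OF assms(5)] tendsto_mult_right_zero[OF assms(6)]]
    by simp
  show ?thesis by (rule Lim_null_comparison[OF always_eventually[OF allI[OF bound]] lim])
qed

lemma hcauchy_weakly_null_imp_null:
  assumes s: "hcauchy s" and weak: "\<And>N. (\<lambda>n. ip (s n) (s N)) \<longlonglongrightarrow> 0"
  shows "(\<lambda>n. hnorm (s n)) \<longlonglongrightarrow> 0"
proof -
  obtain B where B: "\<And>n. hnorm (s n) \<le> B" using hcauchy_bounded[OF s] by blast
  have mem: "s n \<in> V" for n using s by (simp add: hcauchy_mem)
  have "(\<lambda>n. ip (s n) (s n)) \<longlonglongrightarrow> 0"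
  proof (rule LIMSEQ_I)
    fix e :: real assume "0 < e"
    have "0 \<le> B" using B[of 0] hnorm_nonneg[OF mem] by (meson order.trans)
    then obtain \<delta> where \<delta>: "\<delta> > 0" "2 * B * \<delta> < e" using exists_margin \<open>0 < e\<close> by blast
    obtain N where N: "\<forall>m\<ge>N. \<forall>n\<ge>N. hdist (s m) (s n) < \<delta>" using hcauchyD[OF s \<delta>(1)] ..
    obtain N' where N': "\<forall>n\<ge>N'. norm (ip (s n) (s N)) < e / 2"
      using LIMSEQ_D[OF weak[of N], of "e / 2"] \<open>0 < e\<close> by auto
    have "norm (ip (s n) (s n)) < e" if "n \<ge> max N N'" for n
    proof -
      have "ip (s n) (s n) = ip (s n) (\<lambda>z. s n z - s N z) + ip (s n) (s N)"
        using mem by (simp add: ip_diff_right)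
      moreover have "\<bar>ip (s n) (\<lambda>z. s n z - s N z)\<bar> \<le> B * \<delta>"
      proof -
        have "\<bar>ip (s n) (\<lambda>z. s n z - s N z)\<bar> \<le> hnorm (s n) * hdist (s n) (s N)"
          unfolding hdist_def using mem by (intro cauchy_schwarz) auto
        also have "\<dots> \<le> B * \<delta>"
          using B N that mem \<open>0 \<le> B\<close> \<delta>(1) by (intro mult_mono) (auto simp: less_imp_le)
        finally show ?thesis .
      qed
      moreover have "\<bar>ip (s n) (s N)\<bar> < e / 2" using N' that by simp
      ultimately show ?thesis using \<delta>(2) by simp
    qed
    then show "\<exists>N. \<forall>n\<ge>N. norm (ip (s n) (s n) - 0) < e" by (metis diff_zero max.cobounded1
        max.cobounded2 order_trans)
  qed
  then have "(\<lambda>n. sqrt (ip (s n) (s n))) \<longlonglongrightarrow> sqrt 0" by (intro tendsto_real_sqrt)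
  then show ?thesis by (simp add: hnorm_def)
qed

lemma hdist_tendsto_trans:
  assumes "\<And>n. s n \<in> V" "\<And>n. t n \<in> V" "g \<in> V"
    and "(\<lambda>n. hdist (s n) (t n)) \<longlonglongrightarrow> 0" "(\<lambda>n. hdist (t n) g) \<longlonglongrightarrow> 0"
  shows "(\<lambda>n. hdist (s n) g) \<longlonglongrightarrow> 0"
proof (rule tendsto_sandwich[OF _ _ tendsto_const])
  show "\<forall>\<^sub>F n in sequentially. 0 \<le> hdist (s n) g" using assms by simp
  show "\<forall>\<^sub>F n in sequentially. hdist (s n) g \<le> hdist (s n) (t n) + hdist (t n) g"
    using assms by (simp add: hdist_triangle)
  show "(\<lambda>n. hdist (s n) (t n) + hdist (t n) g) \<longlonglongrightarrow> 0"
    using tendsto_add[OF assms(4,5)] by simp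
qed

lemma hcauchy_asymptotic:
  assumes s: "hcauchy s" and t: "\<And>n. t n \<in> V" and close: "(\<lambda>n. hdist (s n) (t n)) \<longlonglongrightarrow> 0"
  shows "hcauchy t"
  unfolding hcauchy_def
proof (intro conjI allI impI)
  show "t n \<in> V" for n by (rule t)
  fix e :: real assume "0 < e"
  then obtain N1 where N1: "\<forall>m\<ge>N1. \<forall>n\<ge>N1. hdist (s m) (s n) < e / 3"
    using hcauchyD[OF s, of "e / 3"] by auto
  obtain N2 where N2: "\<forall>n\<ge>N2. hdist (s n) (t n) < e / 3"
    using LIMSEQ_D[OF close, of "e / 3"] \<open>0 < e\<close> hcauchy_mem[OF s] t by auto
  have "hdist (t m) (t n) < e" if "m \<ge> max N1 N2" "n \<ge> max N1 N2" for m n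
  proof -
    have "hdist (t m) (t n) \<le> hdist (t m) (s m) + (hdist (s m) (s n) + hdist (s n) (t n))"
      using hdist_triangle[of "t m" "s m" "t n"] hdist_triangle[of "s m" "s n" "t n"]
        t hcauchy_mem[OF s]
      by simp
    also have "hdist (t m) (s m) = hdist (s m) (t m)" using t hcauchy_mem[OF s]
      by (simp add: hdist_commute)
    finally have "hdist (t m) (t n) \<le> hdist (s m) (t m) + (hdist (s m) (s n) + hdist (s n) (t n))" .
    moreover have "hdist (s m) (t m) < e / 3" "hdist (s m) (s n) < e / 3"
      "hdist (s n) (t n) < e / 3"
      using N1 N2 that by auto
    ultimately show ?thesis by linarith
  qed
  then show "\<exists>N. \<forall>m\<ge>N. \<forall>n\<ge>N. hdist (t m) (t n) < e" by blast
qed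

end

section \<open>Finite kernel combinations and positive definite kernels\<close>

type_synonym 'z comb = "('z \<times> real) list"

definition nodes_in :: "'z set \<Rightarrow> 'z comb \<Rightarrow> bool" where
  "nodes_in Z l \<longleftrightarrow> fst ` set l \<subseteq> Z"

definition comb_eval :: "('z \<Rightarrow> real) \<Rightarrow> 'z comb \<Rightarrow> real" where
  "comb_eval f l = (\<Sum>p\<leftarrow>l. snd p * f (fst p))"

definition comb_scale :: "real \<Rightarrow> 'z comb \<Rightarrow> 'z comb" where
  "comb_scale c l = map (\<lambda>p. (fst p, c * snd p)) l"

definition gram :: "('z \<Rightarrow> 'z \<Rightarrow> real) \<Rightarrow> 'z comb \<Rightarrow> 'z comb \<Rightarrow> real" where
  "gram K l r = comb_eval (\<lambda>x. comb_eval (K x) r) l"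

definition kernel_comb :: "'z set \<Rightarrow> ('z \<Rightarrow> 'z \<Rightarrow> real) \<Rightarrow> 'z comb \<Rightarrow> 'z \<Rightarrow> real" where
  "kernel_comb Z K l = (\<lambda>y. if y \<in> Z then comb_eval (K y) l else 0)"

definition pos_def_kernel :: "'z set \<Rightarrow> ('z \<Rightarrow> 'z \<Rightarrow> real) \<Rightarrow> bool" where
  "pos_def_kernel Z K \<longleftrightarrow> (\<forall>x\<in>Z. \<forall>y\<in>Z. K x y = K y x) \<and> (\<forall>l. nodes_in Z l \<longrightarrow> 0 \<le> gram K l l)"

lemma pos_def_kernel_sym: "pos_def_kernel Z K \<Longrightarrow> \<forall>x\<in>Z. \<forall>y\<in>Z. K x y = K y x"
  and pos_def_kernel_gram_nonneg: "pos_def_kernel Z K \<Longrightarrow> nodes_in Z l \<Longrightarrow> 0 \<le> gram K l l"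
  by (simp_all add: pos_def_kernel_def)

lemma nodes_in_simps [simp]:
  "nodes_in Z []"
  "nodes_in Z (p # l) \<longleftrightarrow> fst p \<in> Z \<and> nodes_in Z l"
  "nodes_in Z (l @ r) \<longleftrightarrow> nodes_in Z l \<and> nodes_in Z r"
  "nodes_in Z (comb_scale c l) \<longleftrightarrow> nodes_in Z l"
  by (auto simp: nodes_in_def comb_scale_def image_image)

lemma comb_eval_simps [simp]:
  "comb_eval f [] = 0"
  "comb_eval f (p # l) = snd p * f (fst p) + comb_eval f l"
  "comb_eval f (l @ r) = comb_eval f l + comb_eval f r"
  "comb_eval f (comb_scale c l) = c * comb_eval f l"
  by (induction l) (auto simp: comb_eval_def comb_scale_def algebra_simps)

lemma comb_eval_add: "comb_eval (\<lambda>x. f x + g x) l = comb_eval f l + comb_eval g l"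
  and comb_eval_diff: "comb_eval (\<lambda>x. f x - g x) l = comb_eval f l - comb_eval g l"
  and comb_eval_scale: "comb_eval (\<lambda>x. c * f x) l = c * comb_eval f l"
  by (induction l) (auto simp: algebra_simps)

lemma comb_eval_sum: "comb_eval (\<lambda>x. \<Sum>u\<in>U. f u x) l = (\<Sum>u\<in>U. comb_eval (f u) l)"
  by (induction l) (auto simp: sum.distrib sum_distrib_left)

lemma comb_eval_zero [simp]: "comb_eval (\<lambda>_. 0) l = 0"
  using comb_eval_scale[of 0 "\<lambda>_. 0" l] by simp

lemma comb_eval_cong: "(\<And>x. x \<in> fst ` set l \<Longrightarrow> f x = g x) \<Longrightarrow> comb_eval f l = comb_eval g l"
  by (induction l) auto

lemma comb_eval_swap:
  "comb_eval (\<lambda>x. comb_eval (F x) r) l = comb_eval (\<lambda>y. comb_eval (\<lambda>x. F x y) l) r"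
  by (induction l) (auto simp: comb_eval_add comb_eval_scale)

lemma tendsto_comb_eval:
  "(\<And>x. (\<lambda>n. f n x) \<longlonglongrightarrow> g x) \<Longrightarrow> (\<lambda>n. comb_eval (f n) l) \<longlonglongrightarrow> comb_eval g l"
  by (induction l) (auto intro!: tendsto_intros)

lemma gram_simps [simp]:
  "gram K [] r = 0" "gram K l [] = 0"
  "gram K (l @ l') r = gram K l r + gram K l' r"
  "gram K l (r @ r') = gram K l r + gram K l r'"
  "gram K (comb_scale c l) r = c * gram K l r"
  "gram K l (comb_scale c r) = c * gram K l r"
  by (simp_all add: gram_def comb_eval_add comb_eval_scale)

lemma gram_single: "gram K [(x, a)] [(y, b)] = a * b * K x y"
  by (simp add: gram_def)

lemma pos_def_kernel_diag_nonneg: "pos_def_kernel Z K \<Longrightarrow> x \<in> Z \<Longrightarrow> 0 \<le> K x x"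
  using pos_def_kernel_gram_nonneg[of Z K "[(x, 1)]"] by (simp add: gram_single nodes_in_def)

lemma gram_kernel_add: "gram (\<lambda>x y. A x y + B x y) l r = gram A l r + gram B l r"
  and gram_kernel_diff: "gram (\<lambda>x y. A x y - B x y) l r = gram A l r - gram B l r"
  and gram_kernel_scale: "gram (\<lambda>x y. c * A x y) l r = c * gram A l r"
  by (simp_all add: gram_def comb_eval_add comb_eval_diff comb_eval_scale)

lemma gram_kernel_sum: "gram (\<lambda>x y. \<Sum>u\<in>U. A u x y) l r = (\<Sum>u\<in>U. gram (A u) l r)"
  by (simp add: gram_def comb_eval_sum)

lemma gram_rank_one: "gram (\<lambda>x y. f x * f y) l r = comb_eval f l * comb_eval f r"
  by (simp add: gram_def comb_eval_scale mult.commute[of _ "comb_eval f r"])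

lemma gram_transpose: "gram K l r = gram (\<lambda>x y. K y x) r l"
  unfolding gram_def by (rule comb_eval_swap)

lemma gram_cong:
  "(\<And>x y. x \<in> fst ` set l \<Longrightarrow> y \<in> fst ` set r \<Longrightarrow> A x y = B x y) \<Longrightarrow> gram A l r = gram B l r"
  unfolding gram_def by (intro comb_eval_cong) auto

lemma gram_sym:
  assumes "\<forall>x\<in>Z. \<forall>y\<in>Z. K x y = K y x" "nodes_in Z l" "nodes_in Z r"
  shows "gram K l r = gram K r l"
  using assms by (subst gram_transpose) (intro gram_cong, force simp: nodes_in_def)

lemma comb_eval_kernel_comb:
  "nodes_in Z r \<Longrightarrow> comb_eval (kernel_comb Z K l) r = gram K r l"
  unfolding gram_def kernel_comb_def by (intro comb_eval_cong) (auto simp: nodes_in_def)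

lemma kernel_comb_simps [simp]:
  "kernel_comb Z K [] = (\<lambda>_. 0)"
  "kernel_comb Z K (p # l) = (\<lambda>y. snd p * ksec Z K (fst p) y + kernel_comb Z K l y)"
  "kernel_comb Z K (l @ r) = (\<lambda>y. kernel_comb Z K l y + kernel_comb Z K r y)"
  "kernel_comb Z K (comb_scale c l) = (\<lambda>y. c * kernel_comb Z K l y)"
  by (auto simp: kernel_comb_def ksec_def)

lemma ksec_eq_kernel_comb: "ksec Z K x = kernel_comb Z K [(x, 1)]"
  by (auto simp: ksec_def)

lemma kernel_comb_outside: "y \<notin> Z \<Longrightarrow> kernel_comb Z K l y = 0"
  by (simp add: kernel_comb_def)

lemma pos_def_kernel_add:
  "pos_def_kernel Z A \<Longrightarrow> pos_def_kernel Z B \<Longrightarrow> pos_def_kernel Z (\<lambda>x y. A x y + B x y)"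
  unfolding pos_def_kernel_def by (simp add: gram_kernel_add)

lemma pos_def_kernel_scale:
  "pos_def_kernel Z A \<Longrightarrow> 0 \<le> c \<Longrightarrow> pos_def_kernel Z (\<lambda>x y. c * A x y)"
  unfolding pos_def_kernel_def by (simp add: gram_kernel_scale)

lemma pos_def_kernel_sum:
  "(\<And>u. u \<in> U \<Longrightarrow> pos_def_kernel Z (A u)) \<Longrightarrow> pos_def_kernel Z (\<lambda>x y. \<Sum>u\<in>U. A u x y)"
  unfolding pos_def_kernel_def by (simp add: gram_kernel_sum sum_nonneg)

lemma pos_def_kernel_zero: "pos_def_kernel Z (\<lambda>x y. 0)"
  by (simp add: pos_def_kernel_def gram_def)

lemma pos_def_kernel_one: "pos_def_kernel Z (\<lambda>x y. 1)"
proof -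
  have "gram (\<lambda>x y. 1) l l = (comb_eval (\<lambda>_. 1) l)\<^sup>2" if "nodes_in Z l" for l
    using gram_rank_one[of "\<lambda>_. 1" l l] by (simp add: power2_eq_square)
  then show ?thesis by (simp add: pos_def_kernel_def)
qed

section \<open>Reproducing kernel Hilbert spaces\<close>

locale rkhs_space =
  fixes Z :: "'z set" and K :: "'z \<Rightarrow> 'z \<Rightarrow> real"
    and V :: "('z \<Rightarrow> real) set" and ip :: "('z \<Rightarrow> real) \<Rightarrow> ('z \<Rightarrow> real) \<Rightarrow> real"
  assumes is_rkhs: "is_rkhs Z K V ip"

sublocale rkhs_space \<subseteq> pre_hilbert V ip
  using is_rkhs unfolding is_rkhs_def by unfold_locales blast+

context rkhs_space
begin

lemma vanishes_outside: "f \<in> V \<Longrightarrow> z \<notin> Z \<Longrightarrow> f z = 0"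
  and ksec_mem: "x \<in> Z \<Longrightarrow> ksec Z K x \<in> V"
  and reproducing: "x \<in> Z \<Longrightarrow> f \<in> V \<Longrightarrow> ip f (ksec Z K x) = f x"
  and ip_self_eq_zero: "f \<in> V \<Longrightarrow> ip f f = 0 \<Longrightarrow> f = (\<lambda>_. 0)"
  using is_rkhs unfolding is_rkhs_def by blast+

lemma complete:
  "\<forall>s::nat \<Rightarrow> 'z \<Rightarrow> real. (\<forall>n. s n \<in> V) \<and>
     (\<forall>e>0. \<exists>N. \<forall>m\<ge>N. \<forall>n\<ge>N. ip (\<lambda>z. s m z - s n z) (\<lambda>z. s m z - s n z) < e)
     \<longrightarrow> (\<exists>g\<in>V. (\<lambda>n. ip (\<lambda>z. s n z - g z) (\<lambda>z. s n z - g z)) \<longlonglongrightarrow> 0)"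
  using is_rkhs unfolding is_rkhs_def by (elim conjE) assumption

lemma hcauchy_converges:
  assumes s: "hcauchy s"
  obtains g where "g \<in> V" "(\<lambda>n. hdist (s n) g) \<longlonglongrightarrow> 0"
proof -
  have "\<exists>g\<in>V. (\<lambda>n. ip (\<lambda>z. s n z - g z) (\<lambda>z. s n z - g z)) \<longlonglongrightarrow> 0"
    using s unfolding hcauchy_iff_ip by (intro complete[rule_format]) blast
  then obtain g where "g \<in> V" "(\<lambda>n. ip (\<lambda>z. s n z - g z) (\<lambda>z. s n z - g z)) \<longlonglongrightarrow> 0" ..
  with that show ?thesis using hdist_tendsto_zero_iff hcauchy_mem[OF s] by blast
qed

lemma kernel_as_ip: "x \<in> Z \<Longrightarrow> y \<in> Z \<Longrightarrow> ip (ksec Z K x) (ksec Z K y) = K y x"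
  using reproducing[of y "ksec Z K x"] ksec_mem by (simp add: ksec_def)

lemma kernel_sym: "x \<in> Z \<Longrightarrow> y \<in> Z \<Longrightarrow> K x y = K y x"
  by (metis kernel_as_ip ip_sym ksec_mem)

lemma kernel_comb_mem: "nodes_in Z l \<Longrightarrow> kernel_comb Z K l \<in> V"
  by (induction l) (auto intro!: ksec_mem)

lemma ip_kernel_comb: "nodes_in Z l \<Longrightarrow> f \<in> V \<Longrightarrow> ip f (kernel_comb Z K l) = comb_eval f l"
proof (induction l)
  case (Cons p l)
  then show ?case
    by (simp add: ip_add_right ip_scale_right reproducing ksec_mem kernel_comb_mem scale_mem)
qed (simp add: ip_sym[of _ "\<lambda>_. 0"])

lemma ip_kernel_comb_kernel_comb:
  assumes "nodes_in Z l" "nodes_in Z r"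
  shows "ip (kernel_comb Z K l) (kernel_comb Z K r) = gram K l r"
proof -
  have "ip (kernel_comb Z K l) (kernel_comb Z K r) = gram K r l"
    using assms by (simp add: ip_kernel_comb kernel_comb_mem comb_eval_kernel_comb)
  also have "\<dots> = gram K l r"
    using assms kernel_sym by (intro gram_sym[of Z]) blast+
  finally show ?thesis .
qed

lemma pos_def: "pos_def_kernel Z K"
  unfolding pos_def_kernel_def
  by (metis ip_kernel_comb_kernel_comb ip_self_nonneg kernel_comb_mem kernel_sym)

lemma eval_bound: "f \<in> V \<Longrightarrow> x \<in> Z \<Longrightarrow> \<bar>f x\<bar> \<le> hnorm f * sqrt (K x x)"
  using cauchy_schwarz[OF _ ksec_mem, of f x] by (simp add: reproducing hnorm_def kernel_as_ip)

lemma rank_one_dominated: "f \<in> V \<Longrightarrow> pos_def_kernel Z (\<lambda>x y. ip f f * K x y - f x * f y)"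
  unfolding pos_def_kernel_def
proof (intro conjI ballI allI impI)
  fix l assume "f \<in> V" "nodes_in Z l"
  then have "(comb_eval f l)\<^sup>2 \<le> ip f f * gram K l l"
    using cauchy_schwarz_sq[of f "kernel_comb Z K l"]
    by (simp add: ip_kernel_comb kernel_comb_mem comb_eval_kernel_comb)
  then show "0 \<le> gram (\<lambda>x y. ip f f * K x y - f x * f y) l l"
    by (simp add: gram_kernel_diff gram_kernel_scale gram_rank_one power2_eq_square)
qed (simp add: kernel_sym)

end

text \<open>If \<open>f \<in> V\<close> then \<open>energy K f l\<close> is the squared distance from \<open>f\<close> to the kernel
  combination \<open>l\<close> minus \<open>ip f f\<close> (lemma \<open>energy_eq_hdist\<close>), but it only involves the values
  of \<open>f\<close>; a minimising sequence is therefore Cauchy and converges to \<open>f\<close>, which shows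
  \<open>f \<in> V\<close> from rank-one domination alone.\<close>

definition energy :: "('z \<Rightarrow> 'z \<Rightarrow> real) \<Rightarrow> ('z \<Rightarrow> real) \<Rightarrow> 'z comb \<Rightarrow> real" where
  "energy K f l = gram K l l - 2 * comb_eval f l"

lemma energy_lower_bound:
  assumes c: "0 \<le> c" and dom: "pos_def_kernel Z (\<lambda>x y. c * K x y - f x * f y)"
    and K: "pos_def_kernel Z K" and l: "nodes_in Z l"
  shows "- c \<le> energy K f l"
proof -
  have "(comb_eval f l)\<^sup>2 \<le> c * gram K l l"
    using pos_def_kernel_gram_nonneg[OF dom l]
    by (simp add: gram_kernel_diff gram_kernel_scale gram_rank_one power2_eq_square)
  moreover have "0 \<le> gram K l l" using pos_def_kernel_gram_nonneg[OF K l] .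
  moreover have "(c + gram K l l)\<^sup>2 - 4 * (c * gram K l l) = (c - gram K l l)\<^sup>2"
    by (simp add: power2_eq_square algebra_simps)
  ultimately have "(2 * comb_eval f l)\<^sup>2 \<le> (c + gram K l l)\<^sup>2"
    by (simp add: power_mult_distrib) (smt (verit) zero_le_power2)
  then have "2 * comb_eval f l \<le> c + gram K l l"
    by (rule power2_le_imp_le) (use c \<open>0 \<le> gram K l l\<close> in simp)
  then show ?thesis by (simp add: energy_def)
qed

lemma energy_parallelogram:
  assumes "\<forall>x\<in>Z. \<forall>y\<in>Z. K x y = K y x" "nodes_in Z l" "nodes_in Z r"
  shows "gram K (l @ comb_scale (-1) r) (l @ comb_scale (-1) r)
    = 2 * (energy K f l + energy K f r) - 4 * energy K f (comb_scale (1/2) (l @ r))"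
  using gram_sym[OF assms(1,3,2)] by (simp add: energy_def algebra_simps)

lemma energy_append_single:
  assumes "\<forall>x\<in>Z. \<forall>y\<in>Z. K x y = K y x" "nodes_in Z l" "x \<in> Z"
  shows "energy K f (l @ [(x, t)])
    = energy K f l + 2 * t * (kernel_comb Z K l x - f x) + t\<^sup>2 * K x x"
proof -
  have "gram K [(x, t)] l = t * kernel_comb Z K l x"
    using comb_eval_kernel_comb[of Z "[(x, t)]" K l] assms(3) by simp
  moreover have "gram K l [(x, t)] = gram K [(x, t)] l"
    by (rule gram_sym[OF assms(1)]) (simp_all add: assms(2,3))
  ultimately show ?thesis
    by (simp add: energy_def gram_single power2_eq_square algebra_simps)
qed

context rkhs_space
begin

lemma energy_minimizing_hcauchy:
  assumes s: "\<And>n. nodes_in Z (s n)" and lim: "(\<lambda>n. energy K f (s n)) \<longlonglongrightarrow> q"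
    and q: "\<And>l. nodes_in Z l \<Longrightarrow> q \<le> energy K f l"
  shows "hcauchy (\<lambda>n. kernel_comb Z K (s n))"
  unfolding hcauchy_def
proof (intro conjI allI impI)
  show "kernel_comb Z K (s n) \<in> V" for n by (rule kernel_comb_mem[OF s])
  fix e :: real assume "0 < e"
  define \<epsilon> where "\<epsilon> = e\<^sup>2 / 4"
  have "\<epsilon> > 0" using \<open>0 < e\<close> by (simp add: \<epsilon>_def)
  then obtain N where N: "\<And>n. n \<ge> N \<Longrightarrow> \<bar>energy K f (s n) - q\<bar> < \<epsilon>"
    using LIMSEQ_D[OF lim] by auto
  have "hdist (kernel_comb Z K (s m)) (kernel_comb Z K (s n)) < e" if "m \<ge> N" "n \<ge> N" for m n
  proof -
    let ?d = "s m @ comb_scale (-1) (s n)"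
    have "(hdist (kernel_comb Z K (s m)) (kernel_comb Z K (s n)))\<^sup>2 = gram K ?d ?d"
      using s ip_kernel_comb_kernel_comb[of ?d ?d]
      by (simp add: hdist_sq kernel_comb_mem)
    also have "\<dots> = 2 * (energy K f (s m) + energy K f (s n))
        - 4 * energy K f (comb_scale (1/2) (s m @ s n))"
      by (rule energy_parallelogram[OF pos_def_kernel_sym[OF pos_def] s s])
    also have "\<dots> \<le> 2 * (energy K f (s m) - q) + 2 * (energy K f (s n) - q)"
      using q[of "comb_scale (1/2) (s m @ s n)"] s by simp
    also have "\<dots> < 4 * \<epsilon>"
      using N[OF that(1)] N[OF that(2)] by (simp add: abs_less_iff)
    also have "\<dots> = e\<^sup>2" by (simp add: \<epsilon>_def)
    finally show ?thesis
      by (rule power_less_imp_less_base) (use \<open>0 < e\<close> in simp)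
  qed
  then show "\<exists>N. \<forall>m\<ge>N. \<forall>n\<ge>N. hdist (kernel_comb Z K (s m)) (kernel_comb Z K (s n)) < e" by blast
qed

lemma pointwise_limit:
  assumes "\<And>n. T n \<in> V" "g \<in> V" "(\<lambda>n. hdist (T n) g) \<longlonglongrightarrow> 0" "x \<in> Z"
  shows "(\<lambda>n. T n x) \<longlonglongrightarrow> g x"
proof -
  have bound: "norm (T n x - g x) \<le> hdist (T n) g * sqrt (K x x)" for n
    using eval_bound[of "\<lambda>z. T n z - g z" x] assms by (simp add: hdist_def diff_mem)
  have "(\<lambda>n. hdist (T n) g * sqrt (K x x)) \<longlonglongrightarrow> 0"
    by (rule tendsto_mult_left_zero[OF assms(3)])
  then have "(\<lambda>n. T n x - g x) \<longlonglongrightarrow> 0"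
    by (rule Lim_null_comparison[OF always_eventually[OF allI[OF bound]]])
  then show ?thesis by (simp add: LIM_zero_iff)
qed

lemma energy_eq_hdist:
  assumes g: "g \<in> V" and l: "nodes_in Z l"
  shows "energy K g l = (hdist (kernel_comb Z K l) g)\<^sup>2 - ip g g"
proof -
  let ?T = "kernel_comb Z K l"
  have T: "?T \<in> V" using kernel_comb_mem[OF l] .
  have "(hdist ?T g)\<^sup>2 = ip ?T ?T - 2 * ip g ?T + ip g g"
    using T g by (simp add: hdist_sq ip_diff_left ip_diff_right diff_mem ip_sym[of ?T g])
  also have "\<dots> = gram K l l - 2 * comb_eval g l + ip g g"
    using l g by (simp add: ip_kernel_comb_kernel_comb ip_kernel_comb)
  finally show ?thesis by (simp add: energy_def)
qed

lemma energy_minimizer_limit: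
  assumes s: "\<And>n. nodes_in Z (s n)" and lim: "(\<lambda>n. energy K f (s n)) \<longlonglongrightarrow> q"
    and q: "\<And>l. nodes_in Z l \<Longrightarrow> q \<le> energy K f l"
    and g: "g \<in> V" "(\<lambda>n. hdist (kernel_comb Z K (s n)) g) \<longlonglongrightarrow> 0" and x: "x \<in> Z"
  shows "g x = f x"
proof -
  have T: "(\<lambda>n. kernel_comb Z K (s n) x) \<longlonglongrightarrow> g x"
    using pointwise_limit[OF kernel_comb_mem[OF s] g x] .
  have "0 \<le> 0 + 2 * (g x - f x) * t + K x x * t\<^sup>2" for t
  proof -
    have bound: "q \<le> energy K f (s n) + 2 * t * (kernel_comb Z K (s n) x - f x) + t\<^sup>2 * K x x" for n
      using q[of "s n @ [(x, t)]"] s x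
      by (simp add: energy_append_single[OF pos_def_kernel_sym[OF pos_def]])
    have "(\<lambda>n. energy K f (s n) + 2 * t * (kernel_comb Z K (s n) x - f x) + t\<^sup>2 * K x x)
        \<longlonglongrightarrow> q + 2 * t * (g x - f x) + t\<^sup>2 * K x x"
      by (intro tendsto_intros lim T)
    then have "q \<le> q + 2 * t * (g x - f x) + t\<^sup>2 * K x x"
      by (rule LIMSEQ_le_const) (use bound in auto)
    then show ?thesis by (simp add: algebra_simps)
  qed
  moreover have "0 \<le> K x x" by (rule pos_def_kernel_diag_nonneg[OF pos_def x])
  ultimately have "(g x - f x)\<^sup>2 \<le> 0 * K x x"
    by (rule quadratic_nonneg_imp_discriminant)
  then show ?thesis by simp
qed

lemma mem_if_rank_one_dominated:
  assumes c: "0 \<le> c" and vanish: "\<And>z. z \<notin> Z \<Longrightarrow> f z = 0"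
    and dom: "pos_def_kernel Z (\<lambda>x y. c * K x y - f x * f y)"
  shows "f \<in> V \<and> ip f f \<le> c"
proof -
  let ?E = "energy K f ` {l. nodes_in Z l}"
  have lower: "- c \<le> energy K f l" if "nodes_in Z l" for l
    using energy_lower_bound[OF c dom pos_def that] .
  have bdd: "bdd_below ?E" using lower by (intro bdd_belowI2) auto
  define q where "q = Inf ?E"
  have q_le: "q \<le> energy K f l" if "nodes_in Z l" for l
    unfolding q_def using bdd that by (intro cInf_lower) auto
  have "q \<in> closure ?E"
    unfolding q_def using bdd by (intro closure_contains_Inf) (auto intro: exI[of _ "[]"])
  then obtain e where e: "\<And>n. e n \<in> ?E" "e \<longlonglongrightarrow> q"
    by (auto simp: closure_sequential)
  then have "\<forall>n. \<exists>l. nodes_in Z l \<and> e n = energy K f l" by blast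
  then obtain s where s: "\<And>n. nodes_in Z (s n)" "\<And>n. e n = energy K f (s n)" by metis
  have lim: "(\<lambda>n. energy K f (s n)) \<longlonglongrightarrow> q"
    using e(2) s(2) by (metis ext)
  obtain g where g: "g \<in> V" "(\<lambda>n. hdist (kernel_comb Z K (s n)) g) \<longlonglongrightarrow> 0"
    using hcauchy_converges[OF energy_minimizing_hcauchy[OF s(1) lim q_le]] by blast
  have "g = f"
  proof
    fix x show "g x = f x"
      using energy_minimizer_limit[OF s(1) lim q_le g] vanishes_outside[OF g(1)] vanish
      by (cases "x \<in> Z") auto
  qed
  have "(\<lambda>n. energy K f (s n)) \<longlonglongrightarrow> 0\<^sup>2 - ip g g"
    unfolding \<open>g = f\<close>[symmetric] energy_eq_hdist[OF g(1) s(1)]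
    by (intro tendsto_intros g(2))
  with lim have "q = - ip g g" using LIMSEQ_unique by simp
  moreover have "- c \<le> q" by (rule LIMSEQ_le_const[OF lim]) (use lower s(1) in auto)
  ultimately show ?thesis using g(1) \<open>g = f\<close> by simp
qed

end

lemma rkhs_inclusion:
  assumes R1: "is_rkhs Z K1 V1 ip1" and R2: "is_rkhs Z K2 V2 ip2"
    and diff: "pos_def_kernel Z (\<lambda>x y. K2 x y - K1 x y)" and f: "f \<in> V1"
  shows "f \<in> V2 \<and> ip2 f f \<le> ip1 f f"
proof -
  interpret R1: rkhs_space Z K1 V1 ip1 by (rule rkhs_space.intro[OF R1])
  interpret R2: rkhs_space Z K2 V2 ip2 by (rule rkhs_space.intro[OF R2])
  let ?c = "ip1 f f"
  have "pos_def_kernel Z (\<lambda>x y. ?c * (K2 x y - K1 x y) + (?c * K1 x y - f x * f y))"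
    using f by (intro pos_def_kernel_add pos_def_kernel_scale diff
        R1.rank_one_dominated R1.ip_self_nonneg)
  then have "pos_def_kernel Z (\<lambda>x y. ?c * K2 x y - f x * f y)"
    by (simp add: algebra_simps)
  then show ?thesis
    using f by (intro R2.mem_if_rank_one_dominated R1.ip_self_nonneg R1.vanishes_outside)
qed

lemma rkhs_unique:
  assumes "is_rkhs Z K V ip" "is_rkhs Z K V' ip'"
  shows "V' = V" and "f \<in> V \<Longrightarrow> ip' f f = ip f f"
  using rkhs_inclusion[OF assms] rkhs_inclusion[OF assms(2,1)] pos_def_kernel_zero[of Z]
  by (auto intro: antisym)

lemma rkhs_eq: "is_rkhs Z K V ip \<Longrightarrow> rkhs Z K = V"
  unfolding rkhs_def by (rule the_equality) (auto dest: rkhs_unique)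

lemma rkhs_norm_eq:
  assumes R: "is_rkhs Z K V ip" and f: "f \<in> V"
  shows "rkhs_norm Z K f = sqrt (ip f f)"
proof -
  have "is_rkhs Z K V (SOME ip. is_rkhs Z K (rkhs Z K) ip)"
    using someI[of "is_rkhs Z K V" ip] R by (simp add: rkhs_eq[OF R])
  then show ?thesis
    using rkhs_unique(2)[OF R _ f] by (simp add: rkhs_norm_def)
qed

lemma norm_le_of_unit_ball_bound:
  assumes R1: "is_rkhs Z K1 V1 ip1" and R2: "is_rkhs Z K2 V2 ip2" and sub: "V1 \<subseteq> V2"
    and unit: "\<forall>f\<in>V1. sqrt (ip1 f f) \<le> 1 \<longrightarrow> sqrt (ip2 f f) \<le> C" and f: "f \<in> V1"
  shows "sqrt (ip2 f f) \<le> C * sqrt (ip1 f f)"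
proof -
  interpret R1: rkhs_space Z K1 V1 ip1 by (rule rkhs_space.intro[OF R1])
  interpret R2: rkhs_space Z K2 V2 ip2 by (rule rkhs_space.intro[OF R2])
  have "R2.hnorm f \<le> C * R1.hnorm f"
  proof (cases "R1.hnorm f = 0")
    case True
    then have "f = (\<lambda>_. 0)" using f R1.ip_self_eq_zero unfolding R1.hnorm_def by simp
    then show ?thesis using R2.hnorm_def R1.hnorm_def by simp
  next
    case False
    define N where "N = R1.hnorm f"
    have N: "N > 0" using False f unfolding N_def by (simp add: order_neq_le_trans)
    define f' where "f' = (\<lambda>z. inverse N * f z)"
    have f': "f' \<in> V1" "f' \<in> V2" using f sub unfolding f'_def by auto
    have "R1.hnorm f' = inverse N * N" using R1.hnorm_scale[OF f] N unfolding f'_def N_def by simp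
    then have "R1.hnorm f' = 1" using N by simp
    then have "R2.hnorm f' \<le> C" using unit f'(1) unfolding R1.hnorm_def R2.hnorm_def by simp
    have "f = (\<lambda>z. N * f' z)" using N unfolding f'_def by (simp add: mult.assoc[symmetric])
    then have "R2.hnorm f = N * R2.hnorm f'" using R2.hnorm_scale[OF f'(2), of N] N by simp
    also have "\<dots> \<le> N * C" using \<open>R2.hnorm f' \<le> C\<close> N by simp
    finally show ?thesis by (simp add: N_def mult.commute)
  qed
  then show ?thesis by (simp add: R1.hnorm_def R2.hnorm_def)
qed

lemma pos_def_diff_of_bounded_inclusion:
  assumes R1: "is_rkhs Z K1 V1 ip1" and R2: "is_rkhs Z K2 V2 ip2" and sub: "V1 \<subseteq> V2"
    and bound: "\<And>f. f \<in> V1 \<Longrightarrow> sqrt (ip2 f f) \<le> C * sqrt (ip1 f f)"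
  shows "pos_def_kernel Z (\<lambda>x y. C\<^sup>2 * K2 x y - K1 x y)"
  unfolding pos_def_kernel_def
proof (intro conjI ballI allI impI)
  interpret R1: rkhs_space Z K1 V1 ip1 by (rule rkhs_space.intro[OF R1])
  interpret R2: rkhs_space Z K2 V2 ip2 by (rule rkhs_space.intro[OF R2])
  show "C\<^sup>2 * K2 x y - K1 x y = C\<^sup>2 * K2 y x - K1 y x" if "x \<in> Z" "y \<in> Z" for x y
    using that R1.kernel_sym R2.kernel_sym by simp
  fix l assume l: "nodes_in Z l"
  define h where "h = kernel_comb Z K1 l"
  have h: "h \<in> V1" "h \<in> V2" using R1.kernel_comb_mem[OF l] sub by (auto simp: h_def)
  define N where "N = R1.hnorm h"
  have N: "N\<^sup>2 = gram K1 l l" "0 \<le> N"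
    using R1.ip_kernel_comb_kernel_comb[OF l l] h by (simp_all add: N_def R1.hnorm_sq h_def)
  have G2: "0 \<le> gram K2 l l" by (rule pos_def_kernel_gram_nonneg[OF R2.pos_def l])
  have "N\<^sup>2 = ip2 h (kernel_comb Z K2 l)"
    using N h l
    by (simp add: R1.ip_kernel_comb_kernel_comb R2.ip_kernel_comb h_def comb_eval_kernel_comb)
  also have "\<dots> \<le> R2.hnorm h * R2.hnorm (kernel_comb Z K2 l)"
    using R2.cauchy_schwarz[OF h(2) R2.kernel_comb_mem[OF l]] by simp
  also have "R2.hnorm (kernel_comb Z K2 l) = sqrt (gram K2 l l)"
    using l by (simp add: R2.hnorm_def R2.ip_kernel_comb_kernel_comb)
  also have "R2.hnorm h * sqrt (gram K2 l l) \<le> C * N * sqrt (gram K2 l l)"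
    using bound[OF h(1)] G2
    by (intro mult_right_mono) (simp_all add: R2.hnorm_def R1.hnorm_def N_def)
  finally have le: "N * N \<le> N * (C * sqrt (gram K2 l l))" by (simp add: power2_eq_square ac_simps)
  have "N\<^sup>2 \<le> (C * sqrt (gram K2 l l))\<^sup>2" by (rule square_le_square_of_mult_le[OF N(2) le])
  then have "N\<^sup>2 \<le> C\<^sup>2 * gram K2 l l" using G2 by (simp add: power_mult_distrib)
  then show "0 \<le> gram (\<lambda>x y. C\<^sup>2 * K2 x y - K1 x y) l l"
    using N by (simp add: gram_kernel_diff gram_kernel_scale)
qed

lemma pos_def_diff_of_rkhs_inclusion:
  assumes K1: "reproducing_kernel Z K1" and K2: "reproducing_kernel Z K2"
    and sub: "rkhs Z K1 \<subseteq> rkhs Z K2"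
    and unit: "\<forall>f\<in>rkhs Z K1. rkhs_norm Z K1 f \<le> 1 \<longrightarrow> rkhs_norm Z K2 f \<le> C"
  shows "pos_def_kernel Z (\<lambda>x y. C\<^sup>2 * K2 x y - K1 x y)"
proof -
  obtain V1 ip1 where R1: "is_rkhs Z K1 V1 ip1" using K1 by (auto simp: reproducing_kernel_def)
  obtain V2 ip2 where R2: "is_rkhs Z K2 V2 ip2" using K2 by (auto simp: reproducing_kernel_def)
  have sub': "V1 \<subseteq> V2" using sub by (simp add: rkhs_eq[OF R1] rkhs_eq[OF R2])
  have "sqrt (ip2 f f) \<le> C" if "f \<in> V1" "sqrt (ip1 f f) \<le> 1" for f
  proof -
    have "rkhs_norm Z K2 f \<le> C"
      using unit that by (simp add: rkhs_eq[OF R1] rkhs_norm_eq[OF R1])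
    moreover have "f \<in> V2" using sub' that(1) by auto
    ultimately show ?thesis by (simp add: rkhs_norm_eq[OF R2])
  qed
  then have "\<forall>f\<in>V1. sqrt (ip1 f f) \<le> 1 \<longrightarrow> sqrt (ip2 f f) \<le> C" by blast
  from norm_le_of_unit_ball_bound[OF R1 R2 sub' this]
  show ?thesis by (rule pos_def_diff_of_bounded_inclusion[OF R1 R2 sub'])
qed

section \<open>Products of positive definite kernels\<close>

lemma gram_cons_self:
  assumes "\<forall>x\<in>Z. \<forall>y\<in>Z. A x y = A y x" "nodes_in Z l" "p \<in> Z"
  shows "gram A ((p, t) # l) ((p, t) # l)
    = t\<^sup>2 * A p p + 2 * t * comb_eval (\<lambda>x. A x p) l + gram A l l"
proof -
  have "comb_eval (A p) l = comb_eval (\<lambda>x. A x p) l"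
    using assms by (intro comb_eval_cong) (auto simp: nodes_in_def)
  then show ?thesis
    using gram_simps(3)[of A "[(p, t)]" l] gram_simps(4)[of A _ "[(p, t)]" l]
    by (simp add: gram_def comb_eval_scale power2_eq_square algebra_simps)
qed

lemma pos_def_kernel_diag_zero:
  assumes A: "pos_def_kernel Z A" and "p \<in> Z" "x \<in> Z" "A p p = 0"
  shows "A x p = 0"
proof -
  have "0 \<le> A x x + 2 * A x p * t + 0 * t\<^sup>2" for t
    using pos_def_kernel_gram_nonneg[OF A, of "[(p, t), (x, 1)]"] assms
      gram_cons_self[OF pos_def_kernel_sym[OF A], of "[(x, 1)]" p t]
    by (simp add: gram_single algebra_simps)
  from quadratic_nonneg_imp_discriminant[OF this] show ?thesis by simp
qed

lemma pos_def_kernel_deflate: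
  assumes A: "pos_def_kernel Z A" and p: "p \<in> Z"
  defines "g \<equiv> \<lambda>x. A x p / sqrt (A p p)"
  shows "pos_def_kernel Z (\<lambda>x y. A x y - g x * g y)"
    and "x \<in> Z \<Longrightarrow> A x p = g x * g p"
proof -
  have sym: "\<forall>x\<in>Z. \<forall>y\<in>Z. A x y = A y x" using pos_def_kernel_sym[OF A] .
  have App: "0 \<le> A p p" using pos_def_kernel_diag_nonneg[OF A p] .
  \<comment> \<open>if \<open>A p p = 0\<close> then \<open>g = 0\<close> by division by zero, and the row of \<open>p\<close> vanishes as well\<close>
  show "A x p = g x * g p" if "x \<in> Z"
    using pos_def_kernel_diag_zero[OF A p that] App
    by (cases "A p p = 0") (auto simp: g_def field_simps)
  show "pos_def_kernel Z (\<lambda>x y. A x y - g x * g y)"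
  proof (cases "A p p = 0")
    case True
    with A show ?thesis by (simp add: g_def)
  next
    case False
    with App have pos: "A p p > 0" by simp
    show ?thesis
      unfolding pos_def_kernel_def
    proof (intro conjI ballI allI impI)
      show "A x y - g x * g y = A y x - g y * g x" if "x \<in> Z" "y \<in> Z" for x y
        using sym that by simp
      fix l assume l: "nodes_in Z l"
      define L where "L = comb_eval (\<lambda>x. A x p) l"
      have "comb_eval g l = L / sqrt (A p p)"
        using comb_eval_scale[of "inverse (sqrt (A p p))" "\<lambda>x. A x p" l]
        by (simp add: g_def L_def divide_inverse mult.commute)
      then have "gram (\<lambda>x y. A x y - g x * g y) l l = gram A l l - L\<^sup>2 / A p p"
        using App by (simp add: gram_kernel_diff gram_rank_one power_divide flip: power2_eq_square)
      also have "\<dots> = gram A ((p, - L / A p p) # l) ((p, - L / A p p) # l)"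
        using gram_cons_self[OF sym l p] pos by (simp add: L_def power2_eq_square field_simps)
      also have "\<dots> \<ge> 0" using pos_def_kernel_gram_nonneg[OF A] l p by simp
      finally show "0 \<le> gram (\<lambda>x y. A x y - g x * g y) l l" .
    qed
  qed
qed

lemma pos_def_kernel_factorization:
  assumes "finite S" "S \<subseteq> Z" "pos_def_kernel Z A"
  shows "\<exists>n (g :: nat \<Rightarrow> 'z \<Rightarrow> real). \<forall>x\<in>S. \<forall>y\<in>S. A x y = (\<Sum>i<n. g i x * g i y)"
  using assms
proof (induction S arbitrary: A rule: finite_induct)
  case (insert p S)
  define h where "h x = A x p / sqrt (A p p)" for x
  have p: "p \<in> Z" using insert.prems by simp
  note deflate = pos_def_kernel_deflate[OF insert.prems(2) p, folded h_def]
  have "\<exists>n (g :: nat \<Rightarrow> 'z \<Rightarrow> real). \<forall>x\<in>S. \<forall>y\<in>S. A x y - h x * h y = (\<Sum>i<n. g i x * g i y)"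
    by (rule insert.IH[OF _ deflate(1)]) (use insert.prems(1) in simp)
  then obtain n :: nat and g where g: "\<forall>x\<in>S. \<forall>y\<in>S. A x y - h x * h y = (\<Sum>i<n. g i x * g i y)"
    by blast
  define g' where "g' i = (if i < n then (g i)(p := 0) else h)" for i
  have "A x y = (\<Sum>i<Suc n. g' i x * g' i y)" if "x \<in> insert p S" "y \<in> insert p S" for x y
  proof -
    have sum_g': "(\<Sum>i<Suc n. g' i x * g' i y)
        = (if x = p \<or> y = p then 0 else \<Sum>i<n. g i x * g i y) + h x * h y"
      by (auto simp: g'_def intro!: sum.neutral)
    have "x \<in> Z" "y \<in> Z" using that insert.prems(1) p by auto
    then have "A x y - h x * h y = 0" if "x = p \<or> y = p"
      using that deflate(2) pos_def_kernel_sym[OF insert.prems(2)] p by (auto simp: mult.commute)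
    moreover have "A x y - h x * h y = (\<Sum>i<n. g i x * g i y)" if "x \<noteq> p" "y \<noteq> p"
      using g that \<open>x \<in> insert p S\<close> \<open>y \<in> insert p S\<close> by blast
    ultimately show ?thesis unfolding sum_g' by (cases "x = p \<or> y = p") auto
  qed
  then show ?case by blast
qed simp

definition comb_weight :: "('z \<Rightarrow> real) \<Rightarrow> 'z comb \<Rightarrow> 'z comb" where
  "comb_weight h l = map (\<lambda>q. (fst q, h (fst q) * snd q)) l"

lemma comb_eval_weight: "comb_eval f (comb_weight h l) = comb_eval (\<lambda>x. h x * f x) l"
  by (induction l) (simp_all add: comb_weight_def)

lemma gram_weight: "gram B (comb_weight h l) (comb_weight h r) = gram (\<lambda>x y. h x * h y * B x y) l r"
  by (simp add: gram_def comb_eval_weight comb_eval_scale mult.assoc flip: comb_eval_scale)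

lemma pos_def_kernel_mult:
  assumes A: "pos_def_kernel Z A" and B: "pos_def_kernel Z B"
  shows "pos_def_kernel Z (\<lambda>x y. A x y * B x y)"
  unfolding pos_def_kernel_def
proof (intro conjI ballI allI impI)
  fix l assume l: "nodes_in Z l"
  have "\<exists>n (g :: nat \<Rightarrow> _). \<forall>x\<in>fst ` set l. \<forall>y\<in>fst ` set l. A x y = (\<Sum>i<n. g i x * g i y)"
    by (rule pos_def_kernel_factorization[OF _ _ A]) (use l in \<open>simp_all add: nodes_in_def\<close>)
  then obtain n :: nat and g
    where g: "\<forall>x\<in>fst ` set l. \<forall>y\<in>fst ` set l. A x y = (\<Sum>i<n. g i x * g i y)"
    by blast
  have "gram (\<lambda>x y. A x y * B x y) l l = gram (\<lambda>x y. \<Sum>i<n. g i x * g i y * B x y) l l"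
    using g by (intro gram_cong) (simp add: sum_distrib_right del: ball_simps)
  also have "\<dots> = (\<Sum>i<n. gram B (comb_weight (g i) l) (comb_weight (g i) l))"
    by (simp add: gram_kernel_sum gram_weight)
  also have "\<dots> \<ge> 0"
    using pos_def_kernel_gram_nonneg[OF B] l by (intro sum_nonneg) (simp add: nodes_in_def
        comb_weight_def image_image)
  finally show "0 \<le> gram (\<lambda>x y. A x y * B x y) l l" .
qed (use pos_def_kernel_sym[OF A] pos_def_kernel_sym[OF B] in simp)

lemma pos_def_kernel_prod:
  "finite U \<Longrightarrow> (\<And>j. j \<in> U \<Longrightarrow> pos_def_kernel Z (A j)) \<Longrightarrow> pos_def_kernel Z (\<lambda>x y. \<Prod>j\<in>U. A j x y)"
  by (induction U rule: finite_induct) (simp_all add: pos_def_kernel_one pos_def_kernel_mult)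

lemma pos_def_kernel_prod_diff:
  assumes "finite U" "\<And>j. j \<in> U \<Longrightarrow> pos_def_kernel Z (B j)"
    and "\<And>j. j \<in> U \<Longrightarrow> pos_def_kernel Z (\<lambda>x y. A j x y - B j x y)"
  shows "pos_def_kernel Z (\<lambda>x y. (\<Prod>j\<in>U. A j x y) - (\<Prod>j\<in>U. B j x y))"
  using assms
proof (induction U rule: finite_induct)
  case (insert a U)
  have A: "pos_def_kernel Z (A j)" if "j \<in> insert a U" for j
    using pos_def_kernel_add[OF insert.prems(2,1)[OF that]] by simp
  have "pos_def_kernel Z (\<lambda>x y. (A a x y - B a x y) * (\<Prod>j\<in>U. A j x y)
      + B a x y * ((\<Prod>j\<in>U. A j x y) - (\<Prod>j\<in>U. B j x y)))"
    using insert A by (intro pos_def_kernel_add pos_def_kernel_mult pos_def_kernel_prod) auto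
  then show ?case
    using insert.hyps by (simp add: algebra_simps)
qed (simp add: pos_def_kernel_zero)

lemma comb_eval_map_nodes: "comb_eval f (map (\<lambda>p. (\<phi> (fst p), snd p)) l) = comb_eval (\<lambda>x. f (\<phi> x))
    l"
  by (induction l) simp_all

lemma gram_map_nodes:
  "gram m (map (\<lambda>p. (\<phi> (fst p), snd p)) l) (map (\<lambda>p. (\<phi> (fst p), snd p)) r)
    = gram (\<lambda>x y. m (\<phi> x) (\<phi> y)) l r"
  by (simp add: gram_def comb_eval_map_nodes)

lemma pos_def_kernel_pullback:
  assumes m: "pos_def_kernel D m" and \<phi>: "\<And>x. x \<in> Z \<Longrightarrow> \<phi> x \<in> D"
  shows "pos_def_kernel Z (\<lambda>x y. m (\<phi> x) (\<phi> y))"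
  unfolding pos_def_kernel_def
proof (intro conjI ballI allI impI)
  show "m (\<phi> x) (\<phi> y) = m (\<phi> y) (\<phi> x)" if "x \<in> Z" "y \<in> Z" for x y
    using pos_def_kernel_sym[OF m] \<phi>[OF that(1)] \<phi>[OF that(2)] by simp
  fix l assume "nodes_in Z l"
  then have "nodes_in D (map (\<lambda>p. (\<phi> (fst p), snd p)) l)" using \<phi> by (auto simp: nodes_in_def)
  from pos_def_kernel_gram_nonneg[OF m this] show "0 \<le> gram (\<lambda>x y. m (\<phi> x) (\<phi> y)) l l"
    by (simp add: gram_map_nodes)
qed

section \<open>The Moore--Aronszajn construction\<close>

locale pd_kernel =
  fixes Z :: "'z set" and K :: "'z \<Rightarrow> 'z \<Rightarrow> real"
  assumes pos_def: "pos_def_kernel Z K"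
begin

definition span :: "('z \<Rightarrow> real) set" where
  "span = {kernel_comb Z K l | l. nodes_in Z l}"

text \<open>The result does not depend on the representation of \<open>g\<close> that is chosen
  (lemma \<open>span_ip_kernel_comb\<close>).\<close>

definition span_ip :: "('z \<Rightarrow> real) \<Rightarrow> ('z \<Rightarrow> real) \<Rightarrow> real" where
  "span_ip f g = comb_eval f (SOME r. nodes_in Z r \<and> kernel_comb Z K r = g)"

lemma kernel_sym: "\<forall>x\<in>Z. \<forall>y\<in>Z. K x y = K y x"
  using pos_def by (rule pos_def_kernel_sym)

lemma span_memI: "nodes_in Z l \<Longrightarrow> kernel_comb Z K l \<in> span"
  by (auto simp: span_def)

lemma span_memE:
  assumes "f \<in> span"
  obtains l where "nodes_in Z l" "f = kernel_comb Z K l"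
  using assms by (auto simp: span_def)

lemma span_ip_kernel_comb:
  assumes f: "f \<in> span" and r: "nodes_in Z r"
  shows "span_ip f (kernel_comb Z K r) = comb_eval f r"
proof -
  obtain l where l: "nodes_in Z l" "f = kernel_comb Z K l" using f by (rule span_memE)
  define r' where "r' = (SOME r'. nodes_in Z r' \<and> kernel_comb Z K r' = kernel_comb Z K r)"
  have r': "nodes_in Z r'" "kernel_comb Z K r' = kernel_comb Z K r"
    using someI[of "\<lambda>r'. nodes_in Z r' \<and> kernel_comb Z K r' = kernel_comb Z K r" r] r
    by (auto simp: r'_def)
  have "span_ip f (kernel_comb Z K r) = gram K r' l"
    using l r' by (simp add: span_ip_def r'_def comb_eval_kernel_comb)
  also have "\<dots> = comb_eval (kernel_comb Z K r') l"
    by (simp add: comb_eval_kernel_comb[OF l(1)] gram_sym[OF kernel_sym r'(1) l(1)])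
  also have "\<dots> = comb_eval (kernel_comb Z K r) l"
    by (simp only: r'(2))
  also have "\<dots> = gram K r l"
    using l r by (simp add: comb_eval_kernel_comb gram_sym[OF kernel_sym, of l r])
  also have "\<dots> = comb_eval f r"
    using l r by (simp add: comb_eval_kernel_comb)
  finally show ?thesis .
qed

lemma span_ip_gram:
  "nodes_in Z l \<Longrightarrow> nodes_in Z r \<Longrightarrow> span_ip (kernel_comb Z K l) (kernel_comb Z K r) = gram K l r"
  by (simp add: span_ip_kernel_comb span_memI comb_eval_kernel_comb gram_sym[OF kernel_sym, of r l])

sublocale span: pre_hilbert span span_ip
proof
  show "(\<lambda>_. 0) \<in> span" using span_memI[of "[]"] by simp
  fix f g h and a :: real
  assume f: "f \<in> span" and g: "g \<in> span"
  obtain l where l: "nodes_in Z l" "f = kernel_comb Z K l" using f by (rule span_memE)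
  obtain r where r: "nodes_in Z r" "g = kernel_comb Z K r" using g by (rule span_memE)
  show "(\<lambda>z. f z + g z) \<in> span" using span_memI[of "l @ r"] l r by simp
  show "(\<lambda>z. a * f z) \<in> span" using span_memI[of "comb_scale a l"] l by simp
  show "span_ip (\<lambda>z. a * f z) g = a * span_ip f g"
    using span_ip_kernel_comb[OF span_memI[of "comb_scale a l"]] span_ip_kernel_comb[OF f] l r
    by (simp add: comb_eval_scale)
  show "span_ip f g = span_ip g f"
    using l r by (simp add: span_ip_gram gram_sym[OF kernel_sym, of l r])
  show "0 \<le> span_ip f f"
    using l pos_def by (simp add: span_ip_gram pos_def_kernel_gram_nonneg)
  assume h: "h \<in> span"
  obtain t where t: "nodes_in Z t" "h = kernel_comb Z K t" using h by (rule span_memE)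
  show "span_ip (\<lambda>z. f z + g z) h = span_ip f h + span_ip g h"
    using span_ip_kernel_comb[OF span_memI[of "l @ r"]] span_ip_kernel_comb[OF f]
        span_ip_kernel_comb[OF g] l r t
    by (simp add: comb_eval_add)
qed

lemma ksec_in_span: "x \<in> Z \<Longrightarrow> ksec Z K x \<in> span"
  unfolding ksec_eq_kernel_comb by (rule span_memI) simp

lemma span_reproducing: "f \<in> span \<Longrightarrow> x \<in> Z \<Longrightarrow> span_ip f (ksec Z K x) = f x"
  unfolding ksec_eq_kernel_comb by (subst span_ip_kernel_comb) simp_all

lemma span_vanishes_outside: "f \<in> span \<Longrightarrow> z \<notin> Z \<Longrightarrow> f z = 0"
  by (auto elim!: span_memE simp: kernel_comb_outside)

lemma span_eval_bound:
  assumes "f \<in> span" "x \<in> Z"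
  shows "\<bar>f x\<bar> \<le> span.hnorm f * sqrt (K x x)"
proof -
  have "span_ip (ksec Z K x) (ksec Z K x) = K x x"
    using span_reproducing[OF ksec_in_span assms(2)] assms(2) by (simp add: ksec_def)
  then show ?thesis
    using span.cauchy_schwarz[OF assms(1) ksec_in_span[OF assms(2)]] assms
    by (simp add: span_reproducing span.hnorm_def)
qed

definition approximates :: "(nat \<Rightarrow> 'z \<Rightarrow> real) \<Rightarrow> ('z \<Rightarrow> real) \<Rightarrow> bool" where
  "approximates s f \<longleftrightarrow> span.hcauchy s \<and> (\<forall>x. (\<lambda>n. s n x) \<longlonglongrightarrow> f x)"

lemma approximates_hcauchy: "approximates s f \<Longrightarrow> span.hcauchy s"
  and approximates_pointwise: "approximates s f \<Longrightarrow> (\<lambda>n. s n x) \<longlonglongrightarrow> f x"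
  and approximates_mem: "approximates s f \<Longrightarrow> s n \<in> span"
  by (simp_all add: approximates_def span.hcauchy_mem)

lemma approximates_const: "g \<in> span \<Longrightarrow> approximates (\<lambda>_. g) g"
  by (simp add: approximates_def span.hcauchy_def)

lemma approximates_add:
  "approximates s f \<Longrightarrow> approximates t g \<Longrightarrow> approximates (\<lambda>n z. s n z + t n z) (\<lambda>z. f z + g z)"
  by (simp add: approximates_def span.hcauchy_add tendsto_add)

lemma approximates_scale: "approximates s f \<Longrightarrow> approximates (\<lambda>n z. a * s n z) (\<lambda>z. a * f z)"
  by (simp add: approximates_def span.hcauchy_scale tendsto_mult_left)

lemma approximates_diff:
  assumes "approximates s f" "approximates t g"
  shows "approximates (\<lambda>n z. s n z - t n z) (\<lambda>z. f z - g z)"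
  using approximates_add[OF assms(1) approximates_scale[OF assms(2), of "-1"]] by simp

text \<open>Pointwise convergence controls convergence in norm because the inner product with a
  fixed element of the span is a finite combination of point values.\<close>

lemma approximates_null:
  assumes s: "approximates s (\<lambda>_. 0)"
  shows "(\<lambda>n. span.hnorm (s n)) \<longlonglongrightarrow> 0"
proof (rule span.hcauchy_weakly_null_imp_null[OF approximates_hcauchy[OF s]])
  fix N
  obtain r where r: "nodes_in Z r" "s N = kernel_comb Z K r"
    using approximates_mem[OF s] by (rule span_memE)
  have "(\<lambda>n. comb_eval (s n) r) \<longlonglongrightarrow> comb_eval (\<lambda>_. 0) r"
    by (intro tendsto_comb_eval approximates_pointwise[OF s])
  then show "(\<lambda>n. span_ip (s n) (s N)) \<longlonglongrightarrow> 0"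
    using r by (simp add: span_ip_kernel_comb approximates_mem[OF s])
qed

lemma approximates_asymptotic:
  assumes "approximates s f" "approximates t f"
  shows "(\<lambda>n. span.hdist (s n) (t n)) \<longlonglongrightarrow> 0"
proof -
  have "approximates (\<lambda>n z. s n z - t n z) (\<lambda>_. 0)"
    using approximates_diff[OF assms] by simp
  then show ?thesis using approximates_null by (simp add: span.hdist_def)
qed

text \<open>The completion of the span is realised inside the function space: its elements are the
  pointwise limits of Cauchy sequences in the span, and \<open>completion_ip\<close> does not depend on
  the approximating sequences (lemma \<open>completion_ip_limit\<close>).\<close>

definition completion :: "('z \<Rightarrow> real) set" where
  "completion = {f. \<exists>s. approximates s f}"

definition approx_seq :: "('z \<Rightarrow> real) \<Rightarrow> nat \<Rightarrow> 'z \<Rightarrow> real" where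
  "approx_seq f = (SOME s. approximates s f)"

definition completion_ip :: "('z \<Rightarrow> real) \<Rightarrow> ('z \<Rightarrow> real) \<Rightarrow> real" where
  "completion_ip f g = lim (\<lambda>n. span_ip (approx_seq f n) (approx_seq g n))"

lemma completionI: "approximates s f \<Longrightarrow> f \<in> completion"
  by (auto simp: completion_def)

lemma approximates_approx_seq: "f \<in> completion \<Longrightarrow> approximates (approx_seq f) f"
  unfolding completion_def approx_seq_def by (auto intro: someI[where P = "\<lambda>s. approximates s f"])

lemma completion_ip_limit:
  assumes s: "approximates s f" and t: "approximates t g"
  shows "(\<lambda>n. span_ip (s n) (t n)) \<longlonglongrightarrow> completion_ip f g"
proof -
  note sf = approximates_approx_seq[OF completionI[OF s]]
      and tg = approximates_approx_seq[OF completionI[OF t]]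
  have "(\<lambda>n. span_ip (approx_seq f n) (approx_seq g n)) \<longlonglongrightarrow> completion_ip f g"
    unfolding completion_ip_def
    using span.hcauchy_ip_convergent[OF approximates_hcauchy[OF sf] approximates_hcauchy[OF tg]]
    by (simp add: convergent_LIMSEQ_iff)
  moreover have "(\<lambda>n. span_ip (s n) (t n) - span_ip (approx_seq f n) (approx_seq g n)) \<longlonglongrightarrow> 0"
    using s t sf tg
    by (intro span.ip_asymptotic approximates_asymptotic) (auto simp: approximates_hcauchy)
  ultimately have "(\<lambda>n. (span_ip (s n) (t n) - span_ip (approx_seq f n) (approx_seq g n))
      + span_ip (approx_seq f n) (approx_seq g n)) \<longlonglongrightarrow> 0 + completion_ip f g"
    by (intro tendsto_add)
  then show ?thesis by simp
qed

lemma span_subset_completion: "span \<subseteq> completion"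
  using approximates_const completionI by blast

lemma completion_ip_span: "f \<in> span \<Longrightarrow> g \<in> span \<Longrightarrow> completion_ip f g = span_ip f g"
  using completion_ip_limit[OF approximates_const approximates_const, of f g]
  by (simp add: LIMSEQ_const_iff)

sublocale completion: pre_hilbert completion completion_ip
proof
  show "(\<lambda>_. 0) \<in> completion" using span_subset_completion by auto
  fix f g h and a :: real
  assume f: "f \<in> completion" and g: "g \<in> completion"
  note sf = approximates_approx_seq[OF f] and sg = approximates_approx_seq[OF g]
  show "(\<lambda>z. f z + g z) \<in> completion" using completionI[OF approximates_add[OF sf sg]] .
  show "(\<lambda>z. a * f z) \<in> completion" using completionI[OF approximates_scale[OF sf]] .
  show "completion_ip (\<lambda>z. a * f z) g = a * completion_ip f g"
  proof (rule LIMSEQ_unique)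
    show "(\<lambda>n. span_ip (\<lambda>z. a * approx_seq f n z) (approx_seq g n)) \<longlonglongrightarrow> completion_ip (\<lambda>z. a * f z) g"
      by (rule completion_ip_limit[OF approximates_scale[OF sf] sg])
    show "(\<lambda>n. span_ip (\<lambda>z. a * approx_seq f n z) (approx_seq g n)) \<longlonglongrightarrow> a * completion_ip f g"
      using tendsto_mult_left[OF completion_ip_limit[OF sf sg]]
      by (simp add: span.ip_scale_left approximates_mem[OF sf] approximates_mem[OF sg])
  qed
  show "completion_ip f g = completion_ip g f"
    using completion_ip_limit[OF sf sg] completion_ip_limit[OF sg sf]
      approximates_mem[OF sf] approximates_mem[OF sg]
    by (simp add: span.ip_sym[of "approx_seq f _"] LIMSEQ_unique)
  show "0 \<le> completion_ip f f"
    using approximates_mem[OF sf]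
    by (intro LIMSEQ_le_const[OF completion_ip_limit[OF sf sf]]) (auto intro: span.ip_self_nonneg)
  assume h: "h \<in> completion"
  note sh = approximates_approx_seq[OF h]
  show "completion_ip (\<lambda>z. f z + g z) h = completion_ip f h + completion_ip g h"
    using completion_ip_limit[OF approximates_add[OF sf sg] sh]
      tendsto_add[OF completion_ip_limit[OF sf sh] completion_ip_limit[OF sg sh]]
      approximates_mem[OF sf] approximates_mem[OF sg] approximates_mem[OF sh]
    by (simp add: span.ip_add_left LIMSEQ_unique)
qed

lemma completion_hdist_span: "f \<in> span \<Longrightarrow> g \<in> span \<Longrightarrow> completion.hdist f g = span.hdist f g"
  by (simp add: completion.hdist_def completion.hnorm_def span.hdist_def span.hnorm_def
      completion_ip_span span.diff_mem)

lemma completion_vanishes_outside: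
  assumes f: "f \<in> completion" and z: "z \<notin> Z"
  shows "f z = 0"
proof -
  note s = approximates_approx_seq[OF f]
  have "(\<lambda>n. approx_seq f n z) = (\<lambda>n. 0)"
    using span_vanishes_outside[OF approximates_mem[OF s] z] by simp
  then show ?thesis using approximates_pointwise[OF s, of z] by (simp add: LIMSEQ_const_iff)
qed

lemma completion_reproducing:
  assumes x: "x \<in> Z" and f: "f \<in> completion"
  shows "completion_ip f (ksec Z K x) = f x"
proof -
  note s = approximates_approx_seq[OF f]
  have "(\<lambda>n. span_ip (approx_seq f n) (ksec Z K x)) \<longlonglongrightarrow> completion_ip f (ksec Z K x)"
    by (rule completion_ip_limit[OF s approximates_const[OF ksec_in_span[OF x]]])
  moreover have "(\<lambda>n. span_ip (approx_seq f n) (ksec Z K x)) \<longlonglongrightarrow> f x"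
    using approximates_pointwise[OF s, of x]
    by (simp add: span_reproducing approximates_mem[OF s] x)
  ultimately show ?thesis by (rule LIMSEQ_unique)
qed

lemma completion_definite:
  assumes f: "f \<in> completion" and zero: "completion_ip f f = 0"
  shows "f = (\<lambda>_. 0)"
proof
  fix x
  note s = approximates_approx_seq[OF f]
  show "f x = 0"
  proof (cases "x \<in> Z")
    case True
    have "(\<lambda>n. span.hnorm (approx_seq f n)) \<longlonglongrightarrow> sqrt 0"
      unfolding span.hnorm_def using completion_ip_limit[OF s s] zero by (intro tendsto_real_sqrt)
          simp
    then have lim0: "(\<lambda>n. span.hnorm (approx_seq f n) * sqrt (K x x)) \<longlonglongrightarrow> 0"
      by (simp add: tendsto_mult_left_zero)
    have bound: "norm (approx_seq f n x) \<le> span.hnorm (approx_seq f n) * sqrt (K x x)" for n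
      using span_eval_bound[OF approximates_mem[OF s] True] by simp
    have "(\<lambda>n. approx_seq f n x) \<longlonglongrightarrow> 0"
      by (rule Lim_null_comparison[OF always_eventually[OF allI[OF bound]] lim0])
    then show ?thesis using approximates_pointwise[OF s, of x] LIMSEQ_unique by blast
  qed (use completion_vanishes_outside[OF f] in simp)
qed

lemma completion_hdist_approximates:
  assumes s: "approximates s f"
  shows "(\<lambda>n. completion.hdist f (s n)) \<longlonglongrightarrow> 0"
proof (rule LIMSEQ_I)
  fix e :: real assume "0 < e"
  then obtain N where N: "\<forall>m\<ge>N. \<forall>n\<ge>N. span.hdist (s m) (s n) < e / 2"
    using span.hcauchyD[OF approximates_hcauchy[OF s], of "e / 2"] by auto
  have "completion.hdist f (s M) < e" if "M \<ge> N" for M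
  proof -
    have sM: "approximates (\<lambda>n z. s n z - s M z) (\<lambda>z. f z - s M z)"
      using approximates_diff[OF s approximates_const[OF approximates_mem[OF s]]] .
    have bound: "span_ip (\<lambda>z. s n z - s M z) (\<lambda>z. s n z - s M z) \<le> (e / 2)\<^sup>2" if "n \<ge> N" for n
    proof -
      have "(span.hdist (s n) (s M))\<^sup>2 \<le> (e / 2)\<^sup>2"
        using N that \<open>M \<ge> N\<close> approximates_mem[OF s] by (intro power_mono) (auto simp: less_imp_le)
      then show ?thesis using approximates_mem[OF s] by (simp add: span.hdist_sq)
    qed
    have ip_le: "completion_ip (\<lambda>z. f z - s M z) (\<lambda>z. f z - s M z) \<le> (e / 2)\<^sup>2"
      by (rule LIMSEQ_le_const2[OF completion_ip_limit[OF sM sM]]) (use bound in auto)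
    have "completion.hdist f (s M) \<le> e / 2"
      using real_sqrt_le_mono[OF ip_le] \<open>0 < e\<close>
      by (simp add: completion.hdist_def completion.hnorm_def)
    with \<open>0 < e\<close> show ?thesis by simp
  qed
  moreover have "0 \<le> completion.hdist f (s M)" for M
    using completionI[OF s] span_subset_completion approximates_mem[OF s] by (intro
        completion.hdist_nonneg) auto
  ultimately show "\<exists>N. \<forall>M\<ge>N. norm (completion.hdist f (s M) - 0) < e" by auto
qed

lemma span_hcauchy_pointwise_convergent:
  assumes s: "span.hcauchy s"
  shows "convergent (\<lambda>n. s n x)"
proof (cases "x \<in> Z")
  case True
  have "Cauchy (\<lambda>n. s n x)"
  proof (rule CauchyI)
    fix e :: real assume "0 < e"
    define C where "C = sqrt (K x x) + 1"
    have "0 \<le> sqrt (K x x)" using pos_def_kernel_diag_nonneg[OF pos_def True] by simp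
    then have "C > 0" "sqrt (K x x) \<le> C" unfolding C_def by linarith+
    then obtain N where N: "\<forall>m\<ge>N. \<forall>n\<ge>N. span.hdist (s m) (s n) < e / C"
      using span.hcauchyD[OF s, of "e / C"] \<open>0 < e\<close> by auto
    have "norm (s m x - s n x) < e" if "m \<ge> N" "n \<ge> N" for m n
    proof -
      have mem: "s m \<in> span" "s n \<in> span" using span.hcauchy_mem[OF s] by auto
      have "norm (s m x - s n x) \<le> span.hdist (s m) (s n) * sqrt (K x x)"
        using span_eval_bound[of "\<lambda>z. s m z - s n z" x] True mem
        by (simp add: span.hdist_def span.diff_mem)
      also have "\<dots> \<le> span.hdist (s m) (s n) * C"
        using \<open>sqrt (K x x) \<le> C\<close> mem by (intro mult_left_mono) simp_all
      also have "\<dots> < e / C * C"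
        using N that \<open>C > 0\<close> by (intro mult_strict_right_mono) auto
      also have "\<dots> = e" using \<open>C > 0\<close> by simp
      finally show ?thesis .
    qed
    then show "\<exists>M. \<forall>m\<ge>M. \<forall>n\<ge>M. norm (s m x - s n x) < e" by blast
  qed
  then show ?thesis by (simp add: Cauchy_convergent_iff)
next
  case False
  then show ?thesis
    using span_vanishes_outside[OF span.hcauchy_mem[OF s]] by (simp add: convergent_const)
qed

lemma completion_complete:
  assumes \<sigma>: "completion.hcauchy \<sigma>"
  obtains g where "g \<in> completion" "(\<lambda>n. completion.hdist (\<sigma> n) g) \<longlonglongrightarrow> 0"
proof -
  have "\<exists>r\<in>span. completion.hdist (\<sigma> k) r < inverse (Suc k)" for k
  proof -
    note approx = approximates_approx_seq[OF completion.hcauchy_mem[OF \<sigma>, of k]]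
    obtain N where "\<forall>n\<ge>N. norm (completion.hdist (\<sigma> k) (approx_seq (\<sigma> k) n) - 0) < inverse (Suc k)"
      using LIMSEQ_D[OF completion_hdist_approximates[OF approx], of "inverse (Suc k)"] by auto
    then show ?thesis using approximates_mem[OF approx, of N] by force
  qed
  then obtain \<rho> where \<rho>: "\<And>k. \<rho> k \<in> span" "\<And>k. completion.hdist (\<sigma> k) (\<rho> k) < inverse (Suc k)"
    by metis
  have \<rho>_mem: "\<rho> k \<in> completion" for k using \<rho>(1) span_subset_completion by auto
  have close: "(\<lambda>k. completion.hdist (\<sigma> k) (\<rho> k)) \<longlonglongrightarrow> 0"
  proof (rule tendsto_sandwich[OF _ _ tendsto_const LIMSEQ_inverse_real_of_nat])
    show "\<forall>\<^sub>F k in sequentially. 0 \<le> completion.hdist (\<sigma> k) (\<rho> k)"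
      using completion.hcauchy_mem[OF \<sigma>] \<rho>_mem by simp
    show "\<forall>\<^sub>F k in sequentially. completion.hdist (\<sigma> k) (\<rho> k) \<le> inverse (real (Suc k))"
      using \<rho>(2) by (simp add: less_imp_le)
  qed
  have "completion.hcauchy \<rho>" by (rule completion.hcauchy_asymptotic[OF \<sigma> \<rho>_mem close])
  then have \<rho>_cauchy: "span.hcauchy \<rho>"
    by (simp add: completion.hcauchy_def span.hcauchy_def completion_hdist_span \<rho>(1))
  define g where "g x = lim (\<lambda>k. \<rho> k x)" for x
  have approx: "approximates \<rho> g"
    using span_hcauchy_pointwise_convergent[OF \<rho>_cauchy] \<rho>_cauchy
    by (simp add: approximates_def g_def convergent_LIMSEQ_iff)
  have g: "g \<in> completion" by (rule completionI[OF approx])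
  have "(\<lambda>k. completion.hdist (\<rho> k) g) \<longlonglongrightarrow> 0"
    using completion_hdist_approximates[OF approx] g \<rho>_mem by (simp add: completion.hdist_commute)
  then have "(\<lambda>k. completion.hdist (\<sigma> k) g) \<longlonglongrightarrow> 0"
    by (rule completion.hdist_tendsto_trans[OF completion.hcauchy_mem[OF \<sigma>] \<rho>_mem g close])
  with g show ?thesis by (rule that)
qed

theorem completion_is_rkhs: "is_rkhs Z K completion completion_ip"
  unfolding is_rkhs_def
proof (intro conjI ballI allI impI)
  show "completion \<subseteq> {f. \<forall>z. z \<notin> Z \<longrightarrow> f z = 0}" using completion_vanishes_outside by blast
  show "(\<lambda>_. 0) \<in> completion" by simp
  fix s :: "nat \<Rightarrow> 'z \<Rightarrow> real"
  assume "(\<forall>n. s n \<in> completion) \<and>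
    (\<forall>e>0. \<exists>N. \<forall>m\<ge>N. \<forall>n\<ge>N. completion_ip (\<lambda>z. s m z - s n z) (\<lambda>z. s m z - s n z) < e)"
  then have s: "completion.hcauchy s" by (simp add: completion.hcauchy_iff_ip)
  obtain g where "g \<in> completion" "(\<lambda>n. completion.hdist (s n) g) \<longlonglongrightarrow> 0"
    by (rule completion_complete[OF s])
  then show "\<exists>g\<in>completion. (\<lambda>n. completion_ip (\<lambda>z. s n z - g z) (\<lambda>z. s n z - g z)) \<longlonglongrightarrow> 0"
    using completion.hdist_tendsto_zero_iff completion.hcauchy_mem[OF s] by blast
qed (use span_subset_completion ksec_in_span in
    \<open>auto simp: completion.add_mem completion.scale_mem completion.ip_add_left
      completion.ip_scale_left completion.ip_sym completion.ip_self_nonneg completion_definite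
      completion_reproducing\<close>)

end

theorem pos_def_kernel_imp_reproducing_kernel:
  "pos_def_kernel Z K \<Longrightarrow> reproducing_kernel Z K"
  unfolding reproducing_kernel_def using pd_kernel.completion_is_rkhs[OF pd_kernel.intro] by blast

lemma rkhs_inclusion_of_pos_def_diff:
  assumes K1: "pos_def_kernel Z K1" and diff: "pos_def_kernel Z (\<lambda>x y. K2 x y - K1 x y)"
  shows "rkhs Z K1 \<subseteq> rkhs Z K2 \<and> (\<forall>f\<in>rkhs Z K1. rkhs_norm Z K2 f \<le> rkhs_norm Z K1 f)"
proof -
  have K2: "pos_def_kernel Z K2" using pos_def_kernel_add[OF K1 diff] by simp
  obtain V1 ip1 where R1: "is_rkhs Z K1 V1 ip1"
    using pos_def_kernel_imp_reproducing_kernel[OF K1] by (auto simp: reproducing_kernel_def)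
  obtain V2 ip2 where R2: "is_rkhs Z K2 V2 ip2"
    using pos_def_kernel_imp_reproducing_kernel[OF K2] by (auto simp: reproducing_kernel_def)
  show ?thesis
    using rkhs_inclusion[OF R1 R2 diff]
    by (auto simp: rkhs_eq[OF R1] rkhs_eq[OF R2] rkhs_norm_eq[OF R1] rkhs_norm_eq[OF R2])
qed

section \<open>Weighted product kernels\<close>

lemma pos_def_prod_kernel:
  assumes m: "pos_def_kernel D m" and u: "u \<subseteq> {1..d}"
  shows "pos_def_kernel (cube D d) (prod_kernel m u)"
proof -
  have "pos_def_kernel (cube D d) (\<lambda>x y. \<Prod>j\<in>u. m (x j) (y j))"
    using u finite_subset[OF u]
    by (intro pos_def_kernel_prod pos_def_kernel_pullback[OF m]) (auto simp: cube_def PiE_iff)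
  then show ?thesis by (simp add: prod_kernel_def[abs_def])
qed

lemma pos_def_weighted_kernel:
  assumes "\<eta> \<in> weights d" "pos_def_kernel D m"
  shows "pos_def_kernel (cube D d) (weighted_kernel d \<eta> m)"
  using assms unfolding weighted_kernel_def[abs_def] weights_def
  by (intro pos_def_kernel_sum pos_def_kernel_scale pos_def_prod_kernel) auto

lemma weighted_kernel_T_up:
  "weighted_kernel d (T_up d C \<eta>) m x y =
     (\<Sum>u\<in>Pow {1..d}. \<eta> u * (C ^ (2 * card u) * (\<Prod>j\<in>u. 1 + m (x j) (y j))))"
proof -
  let ?P = "Pow {1..d::nat}" and ?k = "\<lambda>w. prod_kernel m w x y"
  have "weighted_kernel d (T_up d C \<eta>) m x y
      = (\<Sum>w\<in>?P. \<Sum>v\<in>{v \<in> ?P. w \<subseteq> v}. C ^ (2 * card v) * \<eta> v * ?k w)"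
    unfolding weighted_kernel_def T_up_def sum_distrib_right
    by (intro sum.cong refl arg_cong[where f="\<lambda>A. sum _ A"]) auto
  also have "\<dots> = (\<Sum>v\<in>?P. \<Sum>w\<in>{w \<in> ?P. w \<subseteq> v}. C ^ (2 * card v) * \<eta> v * ?k w)"
    by (rule sum.swap_restrict) auto
  also have "\<dots> = (\<Sum>v\<in>?P. \<eta> v * (C ^ (2 * card v) * (\<Sum>w\<in>Pow v. ?k w)))"
    by (intro sum.cong refl) (auto simp: sum_distrib_left ac_simps intro!: sum.cong)
  also have "\<dots> = (\<Sum>v\<in>?P. \<eta> v * (C ^ (2 * card v) * (\<Prod>j\<in>v. 1 + m (x j) (y j))))"
  proof (intro sum.cong refl)
    fix v assume "v \<in> ?P"
    then have "finite v" by (auto intro: finite_subset)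
    then have "(\<Prod>j\<in>v. m (x j) (y j) + 1) = (\<Sum>w\<in>Pow v. ?k w)"
      by (simp add: prod_add prod_kernel_def)
    then show "\<eta> v * (C ^ (2 * card v) * (\<Sum>w\<in>Pow v. ?k w))
        = \<eta> v * (C ^ (2 * card v) * (\<Prod>j\<in>v. 1 + m (x j) (y j)))"
      by (simp add: add.commute)
  qed
  finally show ?thesis .
qed

lemma pos_def_weighted_kernel_T_up_diff:
  assumes \<eta>: "\<eta> \<in> weights d" and m: "pos_def_kernel D m"
    and embed: "pos_def_kernel D (\<lambda>x y. C\<^sup>2 * (1 + m_up x y) - m x y)"
  shows "pos_def_kernel (cube D d)
           (\<lambda>x y. weighted_kernel d (T_up d C \<eta>) m_up x y - weighted_kernel d \<eta> m x y)"
proof -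
  have "pos_def_kernel (cube D d)
      (\<lambda>x y. (\<Prod>j\<in>u. C\<^sup>2 * (1 + m_up (x j) (y j))) - (\<Prod>j\<in>u. m (x j) (y j)))"
    if "u \<subseteq> {1..d}" for u
    using that finite_subset[OF that]
    by (intro pos_def_kernel_prod_diff pos_def_kernel_pullback[OF m]
        pos_def_kernel_pullback[OF embed])
      (auto simp: cube_def PiE_iff)
  then have "pos_def_kernel (cube D d) (\<lambda>x y. \<Sum>u\<in>Pow {1..d}.
      \<eta> u * ((\<Prod>j\<in>u. C\<^sup>2 * (1 + m_up (x j) (y j))) - (\<Prod>j\<in>u. m (x j) (y j))))"
    using \<eta> unfolding weights_def by (intro pos_def_kernel_sum pos_def_kernel_scale) auto
  moreover have "weighted_kernel d (T_up d C \<eta>) m_up x y - weighted_kernel d \<eta> m x y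
      = (\<Sum>u\<in>Pow {1..d}.
          \<eta> u * ((\<Prod>j\<in>u. C\<^sup>2 * (1 + m_up (x j) (y j))) - (\<Prod>j\<in>u. m (x j) (y j))))" for x y
    unfolding weighted_kernel_T_up
    by (simp add: weighted_kernel_def prod_kernel_def prod.distrib power_mult
        right_diff_distrib sum_subtractf)
  ultimately show ?thesis by simp
qed

theorem mainTheorem14:
  fixes D :: "'a set" and d :: nat
    and m m_up :: "'a \<Rightarrow> 'a \<Rightarrow> real"
    and C :: real and \<eta> :: "nat set \<Rightarrow> real"
  assumes "D \<noteq> {}"
    and "reproducing_kernel D m" and "\<exists>x\<in>D. \<exists>y\<in>D. m x y \<noteq> 0"
    and "reproducing_kernel D m_up" and "\<exists>x\<in>D. \<exists>y\<in>D. m_up x y \<noteq> 0"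
    and "rkhs D m \<subseteq> rkhs D (\<lambda>x y. 1 + m_up x y)"
    and "C > 0"
    and "\<forall>f\<in>rkhs D m. rkhs_norm D m f \<le> 1 \<longrightarrow> rkhs_norm D (\<lambda>x y. 1 + m_up x y) f \<le> C"
    and "\<eta> \<in> S_set d C"
  shows "rkhs (cube D d) (weighted_kernel d \<eta> m)
           \<subseteq> rkhs (cube D d) (weighted_kernel d (T_up d C \<eta>) m_up)
       \<and> (\<forall>f\<in>rkhs (cube D d) (weighted_kernel d \<eta> m).
            rkhs_norm (cube D d) (weighted_kernel d (T_up d C \<eta>) m_up) f
              \<le> rkhs_norm (cube D d) (weighted_kernel d \<eta> m) f)"
proof -
  have m: "pos_def_kernel D m" and m_up: "pos_def_kernel D m_up"
    using assms(2,4)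
    by (auto simp: reproducing_kernel_def intro: rkhs_space.pos_def rkhs_space.intro)
  have "reproducing_kernel D (\<lambda>x y. 1 + m_up x y)"
    by (intro pos_def_kernel_imp_reproducing_kernel pos_def_kernel_add pos_def_kernel_one m_up)
  then have embed: "pos_def_kernel D (\<lambda>x y. C\<^sup>2 * (1 + m_up x y) - m x y)"
    using pos_def_diff_of_rkhs_inclusion[OF assms(2) _ assms(6,8)] by simp
  have \<eta>: "\<eta> \<in> weights d" using assms(9) by (simp add: S_set_def)
  show ?thesis
    by (intro rkhs_inclusion_of_pos_def_diff pos_def_weighted_kernel[OF \<eta> m]
        pos_def_weighted_kernel_T_up_diff[OF \<eta> m embed])
qed

end
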